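(* Let $A,B\in\mathbb{R}_+^{m\times n}$ be a WN-pair, and let $\mathcal{M}(B)$ be the set of all $K\subseteq[n]$ with $|K|=m$ such that $B[[m],K]$ is a monomial matrix. Then $$\rho(A,B)=\min\{\rho(B[[m],K]^{-1}A[[m],K]):K\in\mathcal{M}(B)\}.$$ For each $K\in\mathcal{M}(B)$ attaining this minimum there exists an optimal $\mathbf{y}\in\Pi_n$ with $\operatorname{supp}\mathbf{y}\subseteq K$ that is a GPF-eigenvector, i.e. $A\mathbf{y}=\rho(A,B)B\mathbf{y}$. If moreover the WN-pair is $S$-irreducible, then each such $\mathbf{y}$ is minimal optimal.
   Context: $[m]=\{1,\dots,m\}$; $\Pi_n$ is the set of probability vectors in $\mathbb{R}^n$; $\rho(C)$ is the spectral radius of a square matrix $C$. For $F\in\mathbb{R}^{m\times n}$ and $K\subseteq[n]$, $F[[m],K]$ is the submatrix formed by the columns in $K$. For $A,B\in\mathbb{R}_+^{m\times n}$ and $\mathbf{x}\in\mathbb{R}^n_+\setminus\{\mathbf{0}\}$, $r(A,B,\mathbf{x})=\max_{i\in[m]}\frac{(A\mathbf{x})_i}{(B\mathbf{x})_i}\in[0,\infty]$ (conventions $\frac00=0$, $\frac c0=\infty$ for $c>0$), and $\rho(A,B)=\inf\{r(A,B,\mathbf{x}):\mathbf{x}>\mathbf{0}\}$. A vector $\mathbf{y}\in\mathbb{R}^n_+\setminus\{\mathbf{0}\}$ is optimal if $r(A,B,\mathbf{y})=\rho(A,B)$ and there is a sequence $\mathbf{y}_k>\mathbf{0}$ with $\mathbf{y}_k\to\mathbf{y}$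 and $r(A,B,\mathbf{y}_k)\to\rho(A,B)$; minimal optimal if moreover no optimal vector has support strictly contained in $\operatorname{supp}\mathbf{y}$; a GPF-eigenvector if $A\mathbf{y}=\rho(A,B)B\mathbf{y}$. A pair $A,B\in\mathbb{R}_+^{m\times n}$ is a WN-pair if $n\ge m$, $B$ has no zero row, and each column of $B$ has exactly one positive entry. A square nonnegative matrix is monomial if each row and each column has exactly one positive entry; it is irreducible if the digraph with an edge $i\to j$ iff the $(i,j)$ entry is positive is strongly connected. A WN-pair is $S$-irreducible if for every $K\in\mathcal M(B)$ the matrix $B[[m],K]^{-1}A[[m],K]$ is irreducible. *)

theory Defs
  imports Complex_Main "HOL-Library.Extended_Real"
    "Jordan_Normal_Form.Spectral_Radius" "Jordan_Normal_Form.DL_Submatrix"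
    "Jordan_Normal_Form.Gauss_Jordan_Elimination"
begin

text \<open>Matrices are JNF matrices; A, B are m x n real matrices, vectors have dimension n.
  Indices are 0-based: [m] is rendered as {..<m}.\<close>

definition nonneg_mat :: "real mat \<Rightarrow> bool" where
  "nonneg_mat C \<longleftrightarrow> (\<forall>i<dim_row C. \<forall>j<dim_col C. C $$ (i,j) \<ge> 0)"

definition nonneg_vec :: "real vec \<Rightarrow> bool" where
  "nonneg_vec x \<longleftrightarrow> (\<forall>i<dim_vec x. x $ i \<ge> 0)"

definition pos_vec :: "real vec \<Rightarrow> bool" where
  "pos_vec x \<longleftrightarrow> (\<forall>i<dim_vec x. x $ i > 0)"

definition supp_vec :: "real vec \<Rightarrow> nat set" where
  "supp_vec x = {i. i < dim_vec x \<and> x $ i \<noteq> 0}"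

definition prob_vec :: "nat \<Rightarrow> real vec \<Rightarrow> bool" where
  "prob_vec n y \<longleftrightarrow> dim_vec y = n \<and> nonneg_vec y \<and> (\<Sum>i<n. y $ i) = 1"

definition ratio_e :: "real \<Rightarrow> real \<Rightarrow> ereal" where
  "ratio_e a b = (if b = 0 then (if a = 0 then 0 else \<infinity>) else ereal (a / b))"

definition r_AB :: "real mat \<Rightarrow> real mat \<Rightarrow> real vec \<Rightarrow> ereal" where
  "r_AB A B x = (SUP i\<in>{..<dim_row A}. ratio_e ((A *\<^sub>v x) $ i) ((B *\<^sub>v x) $ i))"

definition rho_AB :: "real mat \<Rightarrow> real mat \<Rightarrow> ereal" where
  "rho_AB A B = (INF x\<in>{x. dim_vec x = dim_col A \<and> pos_vec x}. r_AB A B x)"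

definition optimal :: "real mat \<Rightarrow> real mat \<Rightarrow> real vec \<Rightarrow> bool" where
  "optimal A B y \<longleftrightarrow> dim_vec y = dim_col A \<and> nonneg_vec y \<and> y \<noteq> 0\<^sub>v (dim_col A) \<and>
     r_AB A B y = rho_AB A B \<and>
     (\<exists>Y :: nat \<Rightarrow> real vec. (\<forall>k. dim_vec (Y k) = dim_col A \<and> pos_vec (Y k)) \<and>
        (\<forall>i<dim_col A. (\<lambda>k. Y k $ i) \<longlonglongrightarrow> y $ i) \<and>
        (\<lambda>k. r_AB A B (Y k)) \<longlonglongrightarrow> rho_AB A B)"

definition minimal_optimal :: "real mat \<Rightarrow> real mat \<Rightarrow> real vec \<Rightarrow> bool" where
  "minimal_optimal A B y \<longleftrightarrow> optimal A B y \<and>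
     \<not> (\<exists>z. optimal A B z \<and> supp_vec z \<subset> supp_vec y)"

definition GPF_eigenvector :: "real mat \<Rightarrow> real mat \<Rightarrow> real vec \<Rightarrow> bool" where
  "GPF_eigenvector A B y \<longleftrightarrow> dim_vec y = dim_col A \<and> nonneg_vec y \<and> y \<noteq> 0\<^sub>v (dim_col A) \<and>
     (\<exists>c. rho_AB A B = ereal c \<and> A *\<^sub>v y = c \<cdot>\<^sub>v (B *\<^sub>v y))"

definition monomial_mat :: "real mat \<Rightarrow> bool" where
  "monomial_mat C \<longleftrightarrow> dim_row C = dim_col C \<and> nonneg_mat C \<and>
     (\<forall>i<dim_row C. \<exists>!j. j < dim_col C \<and> C $$ (i,j) > 0) \<and>
     (\<forall>j<dim_col C. \<exists>!i. i < dim_row C \<and> C $$ (i,j) > 0)"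

definition irreducible_mat :: "real mat \<Rightarrow> bool" where
  "irreducible_mat C \<longleftrightarrow> dim_row C = dim_col C \<and>
     (\<forall>i<dim_row C. \<forall>j<dim_row C.
        (i, j) \<in> {(a, b). a < dim_row C \<and> b < dim_row C \<and> C $$ (a, b) > 0}\<^sup>*)"

definition WN_pair :: "nat \<Rightarrow> nat \<Rightarrow> real mat \<Rightarrow> real mat \<Rightarrow> bool" where
  "WN_pair m n A B \<longleftrightarrow> A \<in> carrier_mat m n \<and> B \<in> carrier_mat m n \<and>
     nonneg_mat A \<and> nonneg_mat B \<and> n \<ge> m \<and>
     (\<forall>i<m. \<exists>j<n. B $$ (i,j) \<noteq> 0) \<and>
     (\<forall>j<n. \<exists>!i. i < m \<and> B $$ (i,j) > 0)"

text \<open>F[[m],K]: the submatrix with all rows and the columns in K (in increasing order).\<close>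
definition cols_sub :: "real mat \<Rightarrow> nat set \<Rightarrow> real mat" where
  "cols_sub F K = submatrix F {..<dim_row F} K"

definition M_set :: "real mat \<Rightarrow> nat set set" where
  "M_set B = {K. K \<subseteq> {..<dim_col B} \<and> card K = dim_row B \<and> monomial_mat (cols_sub B K)}"

definition C_K :: "real mat \<Rightarrow> real mat \<Rightarrow> nat set \<Rightarrow> real mat" where
  "C_K A B K = the (mat_inverse (cols_sub B K)) * cols_sub A K"

definition spec_rad :: "real mat \<Rightarrow> real" where
  "spec_rad C = spectral_radius (map_mat complex_of_real C)"

definition S_irreducible :: "real mat \<Rightarrow> real mat \<Rightarrow> bool" where
  "S_irreducible A B \<longleftrightarrow> (\<forall>K\<in>M_set B. irreducible_mat (C_K A B K))"

end

theory Submission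
  imports Defs
begin

text \<open>
  For \<open>K \<in> M(B)\<close> the matrix \<open>C\<^sub>K = B\<^sub>K\<^sup>-\<^sup>1 A\<^sub>K\<close> is nonnegative. If \<open>C\<^sub>K v \<le> t v\<close> with \<open>v > 0\<close>
  (e.g. \<open>v = (t I - C\<^sub>K)\<^sup>-\<^sup>1 \<one>\<close> for \<open>t > \<rho>(C\<^sub>K)\<close>), placing \<open>v\<close> on the columns \<open>K\<close> and a small
  \<open>\<delta> > 0\<close> elsewhere gives \<open>r(A,B,x) \<le> t + \<epsilon>\<close>; hence \<open>\<rho>(A,B) \<le> \<rho>(C\<^sub>K)\<close>. Conversely, if
  \<open>x > 0\<close> and \<open>A x \<le> t B x\<close>, summing the columns of \<open>A\<close> over the blocks of columns whose
  \<open>B\<close>-entry lies in the same row gives an \<open>m \<times> m\<close> matrix of spectral radius at most \<open>t\<close>. A positive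
  left subinvariant vector \<open>p\<close> of it at level \<open>t' > t\<close> lets one pick in every block a column \<open>j\<close>
  with \<open>(p\<^sup>T A)\<^sub>j \<le> t' p\<^sub>i B\<^sub>i\<^sub>j\<close>; these columns form some \<open>K \<in> M(B)\<close>, and the Collatz--Wielandt
  bound for \<open>C\<^sub>K\<^sup>T\<close> gives \<open>\<rho>(C\<^sub>K) \<le> t'\<close>.

  For a minimising \<open>K\<close>, a Perron eigenvector of \<open>C\<^sub>K\<close> extended by zero is a GPF-eigenvector, and
  it is optimal as the limit of perturbed positive subinvariant vectors as above. Under
  \<open>S\<close>-irreducibility, an optimal \<open>z\<close> with smaller support would make some row of \<open>B z\<close> vanish
  while the same row of \<open>A z\<close> is positive, so \<open>r(A,B,z) = \<infinity>\<close>.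
\<close>

section \<open>Spectral radius of nonnegative matrices\<close>

lemma mult_mat_vec_nth:
  assumes "A \<in> carrier_mat r c" "dim_vec v = c" "i < r"
  shows "(A *\<^sub>v v) $ i = (\<Sum>j<c. A $$ (i,j) * v $ j)"
  using assms by (auto simp: scalar_prod_def lessThan_atLeast0 intro!: sum.cong)

lemma mult_mat_nth:
  assumes "A \<in> carrier_mat r c" "B \<in> carrier_mat c e" "i < r" "j < e"
  shows "(A * B) $$ (i,j) = (\<Sum>l<c. A $$ (i,l) * B $$ (l,j))"
  using assms by (auto simp: scalar_prod_def lessThan_atLeast0 intro!: sum.cong)

lemma nonneg_matD: "nonneg_mat C \<Longrightarrow> i < dim_row C \<Longrightarrow> j < dim_col C \<Longrightarrow> C $$ (i,j) \<ge> 0"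
  unfolding nonneg_mat_def by blast

lemma pos_vecD: "pos_vec z \<Longrightarrow> i < dim_vec z \<Longrightarrow> z $ i > 0"
  unfolding pos_vec_def by blast

lemma spec_rad_eigenvector:
  assumes C: "C \<in> carrier_mat d d" and d: "0 < d"
  obtains \<mu> w where "w \<in> carrier_vec d" "w \<noteq> 0\<^sub>v d"
    "map_mat complex_of_real C *\<^sub>v w = \<mu> \<cdot>\<^sub>v w" "cmod \<mu> = spec_rad C"
proof -
  let ?C = "map_mat complex_of_real C"
  have C': "?C \<in> carrier_mat d d" using C by auto
  from spectral_radius_mem_max(1)[OF C' d] obtain \<mu> where
    mu: "\<mu> \<in> spectrum ?C" "spectral_radius ?C = norm \<mu>" by auto
  then obtain w where "eigenvector ?C w \<mu>" unfolding spectrum_def eigenvalue_def by auto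
  then show thesis using that C' mu unfolding eigenvector_def spec_rad_def by auto
qed

lemma spec_rad_nonneg:
  assumes "C \<in> carrier_mat d d" "0 < d"
  shows "spec_rad C \<ge> 0"
  using spec_rad_eigenvector[OF assms] norm_ge_zero by metis

lemma spec_rad_transpose:
  assumes C: "C \<in> carrier_mat d d"
  shows "spec_rad (transpose_mat C) = spec_rad C"
proof -
  let ?C = "map_mat complex_of_real C"
  have C': "?C \<in> carrier_mat d d" using C by auto
  have "spectrum (transpose_mat ?C) = spectrum ?C"
    using spectrum_root_char_poly[OF C'] spectrum_root_char_poly[of "transpose_mat ?C" d] C'
    by auto
  then show ?thesis unfolding spec_rad_def spectral_radius_def by (simp add: map_mat_transpose)
qed

lemma nonneg_mat_eigenvector_norm_le:
  assumes C: "C \<in> carrier_mat d d" and nn: "nonneg_mat C" and w: "w \<in> carrier_vec d"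
    and ev: "map_mat complex_of_real C *\<^sub>v w = \<mu> \<cdot>\<^sub>v w" and i: "i < d"
  shows "cmod \<mu> * cmod (w $ i) \<le> (\<Sum>j<d. C $$ (i,j) * cmod (w $ j))"
proof -
  have "cmod \<mu> * cmod (w $ i) = cmod ((map_mat complex_of_real C *\<^sub>v w) $ i)"
    using w i by (auto simp: ev norm_mult)
  also have "\<dots> = cmod (\<Sum>j<d. complex_of_real (C $$ (i,j)) * w $ j)"
    using mult_mat_vec_nth[of "map_mat complex_of_real C" d d w i] C w i by auto
  also have "\<dots> \<le> (\<Sum>j<d. cmod (complex_of_real (C $$ (i,j)) * w $ j))" by (rule norm_sum)
  also have "\<dots> = (\<Sum>j<d. C $$ (i,j) * cmod (w $ j))"
    using nonneg_matD[OF nn] C i by (auto simp: norm_mult intro!: sum.cong)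
  finally show ?thesis .
qed

text \<open>Collatz--Wielandt bound: compare an eigenvector for the spectral radius with \<open>z\<close> at the
  coordinate where \<open>|w\<^sub>i| / z\<^sub>i\<close> is maximal.\<close>
lemma spec_rad_le_subinvariant:
  assumes C: "C \<in> carrier_mat d d" and d: "0 < d" and nn: "nonneg_mat C"
    and z: "z \<in> carrier_vec d" "pos_vec z"
    and le: "\<And>i. i < d \<Longrightarrow> (C *\<^sub>v z) $ i \<le> t * z $ i"
  shows "spec_rad C \<le> t"
proof -
  obtain \<mu> w where w: "w \<in> carrier_vec d" "w \<noteq> 0\<^sub>v d"
    and ev: "map_mat complex_of_real C *\<^sub>v w = \<mu> \<cdot>\<^sub>v w" and mu: "cmod \<mu> = spec_rad C"
    using spec_rad_eigenvector[OF C d] by blast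
  have zpos: "z $ i > 0" if "i < d" for i using pos_vecD[OF z(2)] z(1) that by auto
  define f where "f i = cmod (w $ i) / z $ i" for i
  define s where "s = Max (f ` {..<d})"
  have fin: "finite (f ` {..<d})" "f ` {..<d} \<noteq> {}" using d by auto
  obtain i0 where i0: "i0 < d" "f i0 = s" using Max_in[OF fin] unfolding s_def by auto
  have wle: "cmod (w $ j) \<le> s * z $ j" if "j < d" for j
  proof -
    have "f j \<le> s" unfolding s_def using Max_ge[OF fin(1)] that by auto
    then show ?thesis using zpos[OF that] unfolding f_def by (simp add: field_simps)
  qed
  have wi0: "cmod (w $ i0) = s * z $ i0" using i0 zpos[OF i0(1)] unfolding f_def by auto
  obtain j where j: "j < d" "w $ j \<noteq> 0" using w by (metis carrier_vecD eq_vecI index_zero_vec(1,2))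
  have spos: "s > 0" using wle[OF j(1)] j zpos[OF j(1)] by (smt (verit) mult_nonpos_nonneg zero_less_norm_iff)
  have "cmod \<mu> * (s * z $ i0) \<le> (\<Sum>j<d. C $$ (i0,j) * cmod (w $ j))"
    using nonneg_mat_eigenvector_norm_le[OF C nn w(1) ev i0(1)] wi0 by simp
  also have "\<dots> \<le> (\<Sum>j<d. C $$ (i0,j) * (s * z $ j))"
    using nonneg_matD[OF nn] C i0 wle by (auto intro!: sum_mono mult_left_mono)
  also have "\<dots> = s * (C *\<^sub>v z) $ i0"
    using mult_mat_vec_nth[of C d d z i0] C z i0 by (auto simp: sum_distrib_left ac_simps)
  also have "\<dots> \<le> t * (s * z $ i0)" using le[OF i0(1)] spos by (simp add: ac_simps)
  finally show ?thesis using mu spos zpos[OF i0(1)] by (simp add: mult_le_cancel_right_pos)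
qed

lemma pow_mat_smult:
  fixes A :: "'a::comm_ring_1 mat"
  assumes "A \<in> carrier_mat n n"
  shows "(a \<cdot>\<^sub>m A) ^\<^sub>m k = (a ^ k) \<cdot>\<^sub>m (A ^\<^sub>m k)"
proof (induction k)
  case 0
  then show ?case using assms by (auto intro!: eq_matI)
next
  case (Suc k)
  have "(a \<cdot>\<^sub>m A) ^\<^sub>m Suc k = ((a ^ k) \<cdot>\<^sub>m (A ^\<^sub>m k)) * (a \<cdot>\<^sub>m A)" using Suc by simp
  also have "\<dots> = (a ^ k * a) \<cdot>\<^sub>m (A ^\<^sub>m k * A)"
    using assms by (intro eq_matI) (auto simp: scalar_prod_def sum_distrib_left ac_simps)
  finally show ?case by (simp add: ac_simps)
qed

lemma pow_mat_Suc_left: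
  fixes C :: "'a::comm_ring_1 mat"
  assumes C: "C \<in> carrier_mat d d"
  shows "C ^\<^sub>m Suc k = C * C ^\<^sub>m k"
proof (induction k)
  case 0
  then show ?case using C by simp
next
  case (Suc k)
  have "C ^\<^sub>m Suc (Suc k) = (C * C ^\<^sub>m k) * C" using Suc by simp
  also have "\<dots> = C * C ^\<^sub>m Suc k"
    using C by (simp add: assoc_mult_mat[of _ d d _ d _ d])
  finally show ?case .
qed

lemma pow_mat_nonneg:
  assumes C: "C \<in> carrier_mat d d" and nn: "nonneg_mat C"
  shows "nonneg_mat (C ^\<^sub>m k)"
proof (induction k)
  case 0
  then show ?case using C by (auto simp: nonneg_mat_def)
next
  case (Suc k)
  have "(C ^\<^sub>m k * C) $$ (i,j) \<ge> 0" if "i < d" "j < d" for i j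
    using mult_mat_nth[of "C ^\<^sub>m k" d d C d i j] C that
      nonneg_matD[OF Suc] nonneg_matD[OF nn]
    by (auto intro!: sum_nonneg)
  then show ?case using C by (auto simp: nonneg_mat_def)
qed

text \<open>Apply the Jordan-normal-form bound for spectral radius below \<open>1\<close> to \<open>C / \<tau>\<close>.\<close>
lemma pow_mat_entries_bound:
  assumes C: "C \<in> carrier_mat d d" and d: "0 < d" and tau: "spec_rad C < \<tau>"
  obtains b where "\<And>k i j. i < d \<Longrightarrow> j < d \<Longrightarrow> \<bar>(C ^\<^sub>m k) $$ (i,j)\<bar> \<le> b * \<tau> ^ k"
proof -
  let ?C = "map_mat complex_of_real C"
  have C': "?C \<in> carrier_mat d d" using C by auto
  have tpos: "\<tau> > 0" using spec_rad_nonneg[OF C d] tau by auto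
  define M where "M = complex_of_real (1 / \<tau>) \<cdot>\<^sub>m ?C"
  have M: "M \<in> carrier_mat d d" using C' unfolding M_def by auto
  from spectral_radius_mem_max(1)[OF M d] obtain \<nu> where
    nu: "\<nu> \<in> spectrum M" "spectral_radius M = norm \<nu>" by auto
  then obtain w where "eigenvector M w \<nu>" unfolding spectrum_def eigenvalue_def by auto
  then have w: "w \<in> carrier_vec d" "w \<noteq> 0\<^sub>v d" "M *\<^sub>v w = \<nu> \<cdot>\<^sub>v w"
    unfolding eigenvector_def using M by auto
  have "?C = complex_of_real \<tau> \<cdot>\<^sub>m M"
    unfolding M_def using tpos by (intro eq_matI) auto
  then have "?C *\<^sub>v w = complex_of_real \<tau> \<cdot>\<^sub>v (M *\<^sub>v w)"
    using w(1) M by (intro eq_vecI) (auto simp: scalar_prod_def sum_distrib_left ac_simps)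
  also have "\<dots> = (complex_of_real \<tau> * \<nu>) \<cdot>\<^sub>v w" using w by (simp add: smult_smult_assoc)
  finally have "?C *\<^sub>v w = (complex_of_real \<tau> * \<nu>) \<cdot>\<^sub>v w" .
  then have "eigenvector ?C w (complex_of_real \<tau> * \<nu>)" unfolding eigenvector_def using w C' by auto
  then have "norm (complex_of_real \<tau> * \<nu>) \<in> norm ` spectrum ?C"
    unfolding spectrum_def eigenvalue_def by auto
  from spectral_radius_mem_max(2)[OF C' d this]
  have "\<tau> * cmod \<nu> \<le> spec_rad C" unfolding spec_rad_def using tpos by (simp add: norm_mult)
  then have "spectral_radius M < 1" using tau tpos nu
    by (smt (verit, ccfv_SIG) mult_less_cancel_left2)
  from spectral_radius_jnf_norm_bound_less_1_upper_triangular[OF M this]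
  obtain c where c: "\<And>k. norm_bound (M ^\<^sub>m k) c" by auto
  have "\<bar>(C ^\<^sub>m k) $$ (i,j)\<bar> \<le> c * \<tau> ^ k" if ij: "i < d" "j < d" for k i j
  proof -
    have "M ^\<^sub>m k = complex_of_real (1 / \<tau>) ^ k \<cdot>\<^sub>m map_mat complex_of_real (C ^\<^sub>m k)"
      unfolding M_def pow_mat_smult[OF C'] of_real_hom.mat_hom_pow[OF C] ..
    then have "(M ^\<^sub>m k) $$ (i,j) = complex_of_real ((C ^\<^sub>m k) $$ (i,j) / \<tau> ^ k)"
      using ij C by (simp add: power_one_over)
    moreover have "norm ((M ^\<^sub>m k) $$ (i,j)) \<le> c" using c[of k] ij M unfolding norm_bound_def by auto
    ultimately have "\<bar>(C ^\<^sub>m k) $$ (i,j)\<bar> / \<tau> ^ k \<le> c"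
      using tpos by (simp add: norm_divide norm_power)
    then show ?thesis using tpos by (simp add: field_simps)
  qed
  then show thesis by (rule that)
qed

definition ones_vec :: "nat \<Rightarrow> real vec" where
  "ones_vec d = vec d (\<lambda>_. 1)"

definition row_sums_pow :: "real mat \<Rightarrow> nat \<Rightarrow> real vec" where
  "row_sums_pow C k = (C ^\<^sub>m k) *\<^sub>v ones_vec (dim_row C)"

text \<open>The Neumann series \<open>\<Sum>\<^sub>k C\<^sup>k \<one> / t\<^sup>k\<^sup>+\<^sup>1 = (t I - C)\<^sup>-\<^sup>1 \<one>\<close>, which converges for \<open>t > \<rho>(C)\<close>.\<close>
definition neumann_vec :: "real mat \<Rightarrow> real \<Rightarrow> real vec" where
  "neumann_vec C t = vec (dim_row C) (\<lambda>i. \<Sum>k. row_sums_pow C k $ i / t ^ Suc k)"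

context
  fixes C :: "real mat" and d :: nat
  assumes C: "C \<in> carrier_mat d d" and d: "0 < d" and nn: "nonneg_mat C"
begin

lemma row_sums_pow_nth:
  "i < d \<Longrightarrow> row_sums_pow C k $ i = (\<Sum>j<d. (C ^\<^sub>m k) $$ (i,j))"
  unfolding row_sums_pow_def using mult_mat_vec_nth[of "C ^\<^sub>m k" d d "ones_vec d" i] C
  by (simp add: ones_vec_def)

lemma row_sums_pow_0: "i < d \<Longrightarrow> row_sums_pow C 0 $ i = 1"
  using C by (simp add: row_sums_pow_def ones_vec_def)

lemma row_sums_pow_Suc:
  assumes "i < d"
  shows "row_sums_pow C (Suc k) $ i = (\<Sum>j<d. C $$ (i,j) * row_sums_pow C k $ j)"
proof -
  have "row_sums_pow C (Suc k) = C *\<^sub>v row_sums_pow C k"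
    using C unfolding row_sums_pow_def pow_mat_Suc_left[OF C]
    by (simp add: assoc_mult_mat_vec[of _ d d _ d] ones_vec_def)
  then show ?thesis using mult_mat_vec_nth[OF C _ assms, of "row_sums_pow C k"] C
    by (simp add: row_sums_pow_def)
qed

lemma row_sums_pow_nonneg: "i < d \<Longrightarrow> row_sums_pow C k $ i \<ge> 0"
  using nonneg_matD[OF pow_mat_nonneg[OF C nn, of k]] C
  by (auto simp: row_sums_pow_nth intro!: sum_nonneg)

text \<open>Rescale an eigenvector for \<open>\<rho>(C)\<close> so that its largest modulus is \<open>1\<close>; at that coordinate
  the triangle inequality propagates \<open>\<rho>(C)\<^sup>k\<close> through the powers.\<close>
lemma spec_rad_pow_le_row_sums:
  obtains i0 where "i0 < d" "\<And>k. spec_rad C ^ k \<le> row_sums_pow C k $ i0"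
proof -
  obtain \<mu> w where w: "w \<in> carrier_vec d" "w \<noteq> 0\<^sub>v d"
    and ev: "map_mat complex_of_real C *\<^sub>v w = \<mu> \<cdot>\<^sub>v w" and mu: "cmod \<mu> = spec_rad C"
    using spec_rad_eigenvector[OF C d] by blast
  define M where "M = Max ((\<lambda>j. cmod (w $ j)) ` {..<d})"
  have fin: "finite ((\<lambda>j. cmod (w $ j)) ` {..<d})" "(\<lambda>j. cmod (w $ j)) ` {..<d} \<noteq> {}"
    using d by auto
  obtain i0 where i0: "i0 < d" "cmod (w $ i0) = M" using Max_in[OF fin] unfolding M_def by auto
  have Mge: "cmod (w $ j) \<le> M" if "j < d" for j unfolding M_def using Max_ge[OF fin(1)] that by auto
  obtain j where j: "j < d" "w $ j \<noteq> 0" using w by (metis carrier_vecD eq_vecI index_zero_vec(1,2))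
  have Mpos: "M > 0" using Mge[OF j(1)] j by (smt (verit) zero_less_norm_iff)
  define a where "a j = cmod (w $ j) / M" for j
  have rho0: "spec_rad C \<ge> 0" by (rule spec_rad_nonneg[OF C d])
  have "spec_rad C ^ k * a i \<le> row_sums_pow C k $ i" if "i < d" for k i
    using that
  proof (induction k arbitrary: i)
    case 0
    then show ?case using Mge[OF 0] Mpos row_sums_pow_0[OF 0] by (simp add: a_def)
  next
    case (Suc k)
    have "spec_rad C * a i \<le> (\<Sum>j<d. C $$ (i,j) * a j)"
      using nonneg_mat_eigenvector_norm_le[OF C nn w(1) ev Suc.prems] Mpos mu
      by (simp add: a_def sum_divide_distrib[symmetric] divide_right_mono)
    then have "spec_rad C ^ k * (spec_rad C * a i) \<le> spec_rad C ^ k * (\<Sum>j<d. C $$ (i,j) * a j)"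
      using rho0 by (simp add: mult_left_mono)
    also have "\<dots> = (\<Sum>j<d. C $$ (i,j) * (spec_rad C ^ k * a j))"
      by (simp add: sum_distrib_left ac_simps)
    also have "\<dots> \<le> (\<Sum>j<d. C $$ (i,j) * row_sums_pow C k $ j)"
      using Suc.IH nonneg_matD[OF nn] C Suc.prems by (intro sum_mono mult_left_mono) auto
    finally show ?case unfolding row_sums_pow_Suc[OF Suc.prems] by (simp add: mult.left_commute)
  qed
  moreover have "a i0 = 1" using i0 Mpos unfolding a_def by auto
  ultimately have "spec_rad C ^ k \<le> row_sums_pow C k $ i0" for k using i0(1) by force
  then show thesis using that[OF i0(1)] by blast
qed

lemma row_sums_pow_bound:
  assumes "spec_rad C < \<tau>"
  obtains b where "\<And>k i. i < d \<Longrightarrow> row_sums_pow C k $ i \<le> b * \<tau> ^ k"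
proof -
  obtain b where b: "\<And>k i j. i < d \<Longrightarrow> j < d \<Longrightarrow> \<bar>(C ^\<^sub>m k) $$ (i,j)\<bar> \<le> b * \<tau> ^ k"
    using pow_mat_entries_bound[OF C d assms] by blast
  have "row_sums_pow C k $ i \<le> (d * b) * \<tau> ^ k" if "i < d" for k i
  proof -
    have "row_sums_pow C k $ i \<le> (\<Sum>j<d. b * \<tau> ^ k)"
      unfolding row_sums_pow_nth[OF that] using b that by (intro sum_mono) (auto simp: abs_le_iff)
    then show ?thesis by simp
  qed
  then show thesis by (rule that)
qed

lemma neumann_summable:
  assumes t: "spec_rad C < t" and i: "i < d"
  shows "summable (\<lambda>k. row_sums_pow C k $ i / t ^ Suc k)"
proof -
  define \<tau> where "\<tau> = (spec_rad C + t) / 2"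
  have tau: "spec_rad C < \<tau>" "\<tau> < t" "0 < \<tau>" using t spec_rad_nonneg[OF C d] unfolding \<tau>_def by auto
  obtain b where b: "\<And>k i. i < d \<Longrightarrow> row_sums_pow C k $ i \<le> b * \<tau> ^ k"
    using row_sums_pow_bound[OF tau(1)] by metis
  show ?thesis
  proof (rule summable_comparison_test')
    show "summable (\<lambda>k. (b / t) * (\<tau> / t) ^ k)"
      using tau by (intro summable_mult summable_geometric) auto
    fix k
    have "norm (row_sums_pow C k $ i / t ^ Suc k) = row_sums_pow C k $ i / t ^ Suc k"
      using row_sums_pow_nonneg[OF i] tau by simp
    also have "\<dots> \<le> b * \<tau> ^ k / t ^ Suc k" using b[OF i, of k] tau by (simp add: divide_right_mono)
    also have "\<dots> = (b / t) * (\<tau> / t) ^ k" by (simp add: power_divide)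
    finally show "norm (row_sums_pow C k $ i / t ^ Suc k) \<le> (b / t) * (\<tau> / t) ^ k" .
  qed
qed

lemma neumann_summable_Suc:
  assumes "spec_rad C < t" "i < d"
  shows "summable (\<lambda>k. row_sums_pow C (Suc k) $ i / t ^ Suc (Suc k))"
  using neumann_summable[OF assms] summable_Suc_iff[where f = "\<lambda>k. row_sums_pow C k $ i / t ^ Suc k"]
  by blast

lemma neumann_vec_nth:
  assumes t: "spec_rad C < t" and i: "i < d"
  shows "neumann_vec C t $ i = 1 / t + (\<Sum>k. row_sums_pow C (Suc k) $ i / t ^ Suc (Suc k))"
proof -
  let ?f = "\<lambda>k. row_sums_pow C k $ i / t ^ Suc k"
  have "neumann_vec C t $ i = suminf ?f" using C i by (simp add: neumann_vec_def)
  also have "\<dots> = ?f 0 + (\<Sum>k. ?f (Suc k))"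
    using suminf_split_head[OF neumann_summable[OF assms]] by linarith
  finally show ?thesis using row_sums_pow_0[OF i] by simp
qed

lemma neumann_vec_carrier: "neumann_vec C t \<in> carrier_vec d"
  using C by (simp add: neumann_vec_def)

lemma neumann_vec_pos:
  assumes t: "spec_rad C < t"
  shows "pos_vec (neumann_vec C t)"
  unfolding pos_vec_def
proof (intro allI impI)
  fix i assume "i < dim_vec (neumann_vec C t)"
  then have i: "i < d" using C by (simp add: neumann_vec_def)
  have tpos: "t > 0" using t spec_rad_nonneg[OF C d] by simp
  have "(\<Sum>k. row_sums_pow C (Suc k) $ i / t ^ Suc (Suc k)) \<ge> 0"
    using neumann_summable_Suc[OF t i] row_sums_pow_nonneg[OF i] tpos by (intro suminf_nonneg) auto
  then show "neumann_vec C t $ i > 0"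
    unfolding neumann_vec_nth[OF t i] using tpos by (simp add: add_pos_nonneg del: power_Suc)
qed

lemma neumann_vec_eq:
  assumes t: "spec_rad C < t" and i: "i < d"
  shows "(C *\<^sub>v neumann_vec C t) $ i = t * neumann_vec C t $ i - 1"
proof -
  let ?f = "\<lambda>j k. row_sums_pow C k $ j / t ^ Suc k"
  have tpos: "t > 0" using t spec_rad_nonneg[OF C d] by simp
  have summ: "\<And>j. j < d \<Longrightarrow> summable (?f j)" by (rule neumann_summable[OF t])
  have "(C *\<^sub>v neumann_vec C t) $ i = (\<Sum>j<d. C $$ (i,j) * suminf (?f j))"
    using mult_mat_vec_nth[OF C _ i, of "neumann_vec C t"] C by (simp add: neumann_vec_def)
  also have "\<dots> = (\<Sum>j<d. \<Sum>k. C $$ (i,j) * ?f j k)"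
    using summ by (intro sum.cong refl suminf_mult[symmetric]) auto
  also have "\<dots> = (\<Sum>k. \<Sum>j<d. C $$ (i,j) * ?f j k)"
    using summ by (intro suminf_sum[symmetric] summable_mult) auto
  also have "\<dots> = (\<Sum>k. t * ?f i (Suc k))"
  proof (rule arg_cong[of _ _ suminf], rule ext)
    fix k
    have "(\<Sum>j<d. C $$ (i,j) * ?f j k) = row_sums_pow C (Suc k) $ i / t ^ Suc k"
      by (simp add: row_sums_pow_Suc[OF i] sum_divide_distrib)
    then show "(\<Sum>j<d. C $$ (i,j) * ?f j k) = t * ?f i (Suc k)" using tpos by simp
  qed
  also have "\<dots> = t * (\<Sum>k. ?f i (Suc k))"
    using neumann_summable_Suc[OF t i] by (rule suminf_mult)
  also have "\<dots> = t * (neumann_vec C t $ i - 1 / t)" using neumann_vec_nth[OF t i] by simp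
  also have "\<dots> = t * neumann_vec C t $ i - 1" using tpos by (simp add: right_diff_distrib)
  finally show ?thesis .
qed

lemma neumann_vec_ge:
  obtains i0 where "i0 < d" "\<And>t. spec_rad C < t \<Longrightarrow> 1 / (t - spec_rad C) \<le> neumann_vec C t $ i0"
proof -
  obtain i0 where i0: "i0 < d" and low: "\<And>k. spec_rad C ^ k \<le> row_sums_pow C k $ i0"
    using spec_rad_pow_le_row_sums by blast
  have "1 / (t - spec_rad C) \<le> neumann_vec C t $ i0" if t: "spec_rad C < t" for t
  proof -
    have tpos: "t > 0" using t spec_rad_nonneg[OF C d] by simp
    have "(\<lambda>k. (1 / t) * (spec_rad C / t) ^ k) sums ((1 / t) * (1 / (1 - spec_rad C / t)))"
      using t spec_rad_nonneg[OF C d] by (intro sums_mult geometric_sums) auto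
    moreover have "(1 / t) * (1 / (1 - spec_rad C / t)) = 1 / (t - spec_rad C)"
      using tpos t by (simp add: field_simps)
    ultimately have g: "(\<lambda>k. (1 / t) * (spec_rad C / t) ^ k) sums (1 / (t - spec_rad C))" by simp
    have "1 / (t - spec_rad C) \<le> (\<Sum>k. row_sums_pow C k $ i0 / t ^ Suc k)"
    proof (rule sums_le[OF _ g summable_sums[OF neumann_summable[OF t i0]]])
      fix k
      show "(1 / t) * (spec_rad C / t) ^ k \<le> row_sums_pow C k $ i0 / t ^ Suc k"
        using low[of k] tpos by (simp add: power_divide divide_right_mono)
    qed
    then show ?thesis using i0 C by (simp add: neumann_vec_def)
  qed
  then show thesis using that[OF i0] by blast
qed

text \<open>Normalise the Neumann vectors at \<open>t\<^sub>k \<down> \<rho>(C)\<close>; by \<open>neumann_vec_ge\<close> their mass grows at least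
  like \<open>1 / (t\<^sub>k - \<rho>(C))\<close>, so the defect \<open>\<epsilon>\<^sub>k\<close> tends to \<open>0\<close>.\<close>
lemma normalized_neumann_seq:
  obtains w T \<epsilon> where "\<And>k. w k \<in> carrier_vec d" "\<And>k. pos_vec (w k)" "\<And>k. (\<Sum>i<d. w k $ i) = 1"
    "\<And>k i. i < d \<Longrightarrow> (C *\<^sub>v w k) $ i = T k * w k $ i - \<epsilon> k" "\<And>k. \<epsilon> k > 0"
    "T \<longlonglongrightarrow> spec_rad C" "\<epsilon> \<longlonglongrightarrow> 0"
proof -
  obtain i0 where i0: "i0 < d"
    and ge: "\<And>t. spec_rad C < t \<Longrightarrow> 1 / (t - spec_rad C) \<le> neumann_vec C t $ i0"
    using neumann_vec_ge by blast
  define T where "T k = spec_rad C + inverse (real (Suc k))" for k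
  have T: "spec_rad C < T k" for k unfolding T_def by simp
  define Z where "Z k = neumann_vec C (T k)" for k
  have Zc: "Z k \<in> carrier_vec d" for k unfolding Z_def by (rule neumann_vec_carrier)
  have Zpos: "Z k $ i > 0" if "i < d" for k i
    using pos_vecD[OF neumann_vec_pos[OF T]] carrier_vecD[OF Zc] that unfolding Z_def by auto
  define N where "N k = (\<Sum>i<d. Z k $ i)" for k
  have Nge: "Z k $ i \<le> N k" if "i < d" for k i
    unfolding N_def using Zpos that by (intro member_le_sum) (auto intro: less_imp_le)
  have Npos: "N k > 0" for k using Nge[OF i0, of k] Zpos[OF i0, of k] by linarith
  have NSuc: "real (Suc k) \<le> N k" for k
    using ge[OF T, of k] Nge[OF i0, of k] unfolding T_def Z_def by (simp add: divide_inverse)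
  define w where "w k = inverse (N k) \<cdot>\<^sub>v Z k" for k
  have wc: "w k \<in> carrier_vec d" for k unfolding w_def using Zc by simp
  have wi: "w k $ i = Z k $ i / N k" if "i < d" for k i
    unfolding w_def using carrier_vecD[OF Zc] that by (simp add: divide_inverse ac_simps)
  show thesis
  proof (rule that[of w T "\<lambda>k. inverse (N k)"])
    show "pos_vec (w k)" for k using wi Zpos Npos carrier_vecD[OF wc] unfolding pos_vec_def by simp
    show "(\<Sum>i<d. w k $ i) = 1" for k
      using wi Npos[of k] unfolding N_def by (simp add: sum_divide_distrib[symmetric])
    show "(C *\<^sub>v w k) $ i = T k * w k $ i - inverse (N k)" if i: "i < d" for k i
    proof -
      have "(C *\<^sub>v w k) $ i = inverse (N k) * (C *\<^sub>v Z k) $ i"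
        unfolding w_def using mult_mat_vec[OF C Zc] C i by simp
      also have "\<dots> = inverse (N k) * (T k * Z k $ i - 1)"
        unfolding Z_def neumann_vec_eq[OF T i] ..
      finally show ?thesis using wi[OF i] by (simp add: divide_inverse algebra_simps)
    qed
    show "T \<longlonglongrightarrow> spec_rad C" unfolding T_def
      using tendsto_add[OF tendsto_const LIMSEQ_inverse_real_of_nat] by simp
    show "(\<lambda>k. inverse (N k)) \<longlonglongrightarrow> 0"
    proof (rule tendsto_sandwich[of "\<lambda>_. 0" _ _ "\<lambda>k. inverse (real (Suc k))"])
      show "\<forall>\<^sub>F k in sequentially. inverse (N k) \<le> inverse (real (Suc k))"
        using NSuc by (simp add: le_imp_inverse_le del: of_nat_Suc)
      show "\<forall>\<^sub>F k in sequentially. 0 \<le> inverse (N k)" using Npos by (simp add: less_imp_le)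
    qed (use LIMSEQ_inverse_real_of_nat in auto)
  qed (use wc Npos in simp_all)
qed

end

lemma convergent_subseq_bounded_family:
  fixes f :: "nat \<Rightarrow> nat \<Rightarrow> real"
  assumes "\<And>k i. i < d \<Longrightarrow> \<bar>f k i\<bar> \<le> B"
  obtains r where "strict_mono r" "\<And>i. i < d \<Longrightarrow> convergent (\<lambda>k. f (r k) i)"
proof -
  have "\<exists>r. strict_mono r \<and> (\<forall>i<d. convergent (\<lambda>k. f (r k) i))"
    using assms
  proof (induction d)
    case 0
    show ?case by (intro exI[of _ id]) (auto simp: strict_mono_def)
  next
    case (Suc d)
    then obtain r where r: "strict_mono r" "\<forall>i<d. convergent (\<lambda>k. f (r k) i)" by force
    obtain r' where r': "strict_mono r'" "monoseq (\<lambda>k. f (r (r' k)) d)"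
      using seq_monosub[of "\<lambda>k. f (r k) d"] by (auto simp: o_def)
    have "Bseq (\<lambda>k. f (r (r' k)) d)" using Suc.prems by (intro BseqI'[of _ B]) auto
    then have cd: "convergent (\<lambda>k. f (r (r' k)) d)" using Bseq_monoseq_convergent r'(2) by blast
    have "convergent (\<lambda>k. f (r (r' k)) i)" if "i < Suc d" for i
    proof (cases "i = d")
      case False
      then have "convergent (\<lambda>k. f (r k) i)" using r(2) that by auto
      from convergent_subseq_convergent[OF this r'(1)] show ?thesis by (simp add: o_def)
    qed (use cd in simp)
    moreover have "strict_mono (\<lambda>k. r (r' k))" using r(1) r'(1) by (simp add: strict_mono_def)
    ultimately show ?case by blast
  qed
  then show thesis using that by blast
qed

lemma eigenvector_of_approx:
  fixes C :: "real mat"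
  assumes C: "C \<in> carrier_mat d d" and w: "\<And>k. w k \<in> carrier_vec d" and y: "y \<in> carrier_vec d"
    and eq: "\<And>k i. i < d \<Longrightarrow> (C *\<^sub>v w k) $ i = T k * w k $ i - \<epsilon> k"
    and lim: "\<And>i. i < d \<Longrightarrow> (\<lambda>k. w k $ i) \<longlonglongrightarrow> y $ i"
    and T: "T \<longlonglongrightarrow> \<rho>" and \<epsilon>: "\<epsilon> \<longlonglongrightarrow> 0"
  shows "C *\<^sub>v y = \<rho> \<cdot>\<^sub>v y"
proof (rule eq_vecI)
  fix i assume "i < dim_vec (\<rho> \<cdot>\<^sub>v y)"
  then have i: "i < d" using y by simp
  have "(\<lambda>k. \<Sum>j<d. C $$ (i,j) * w k $ j) \<longlonglongrightarrow> (\<Sum>j<d. C $$ (i,j) * y $ j)"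
    by (intro tendsto_sum tendsto_mult tendsto_const lim) simp
  then have "(\<lambda>k. (C *\<^sub>v w k) $ i) \<longlonglongrightarrow> (\<Sum>j<d. C $$ (i,j) * y $ j)"
    using mult_mat_vec_nth[OF C carrier_vecD[OF w] i] by simp
  moreover have "(\<lambda>k. (C *\<^sub>v w k) $ i) \<longlonglongrightarrow> \<rho> * y $ i - 0"
    unfolding eq[OF i] by (intro tendsto_diff tendsto_mult lim[OF i] T \<epsilon>)
  ultimately have "(\<Sum>j<d. C $$ (i,j) * y $ j) = \<rho> * y $ i"
    using LIMSEQ_unique by fastforce
  then show "(C *\<^sub>v y) $ i = (\<rho> \<cdot>\<^sub>v y) $ i"
    using mult_mat_vec_nth[OF C _ i, of y] y i by simp
qed (use C y in simp)

lemma perron_eigenvector_approx: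
  assumes C: "C \<in> carrier_mat d d" and d: "0 < d" and nn: "nonneg_mat C"
  obtains u t y where "\<And>k. u k \<in> carrier_vec d" "\<And>k. pos_vec (u k)"
    "\<And>k i. i < d \<Longrightarrow> (C *\<^sub>v u k) $ i \<le> t k * u k $ i" "t \<longlonglongrightarrow> spec_rad C"
    "\<And>i. i < d \<Longrightarrow> (\<lambda>k. u k $ i) \<longlonglongrightarrow> y $ i"
    "y \<in> carrier_vec d" "nonneg_vec y" "(\<Sum>i<d. y $ i) = 1" "C *\<^sub>v y = spec_rad C \<cdot>\<^sub>v y"
proof -
  obtain w T \<epsilon> where wc: "\<And>k. w k \<in> carrier_vec d" and wpos: "\<And>k. pos_vec (w k)"
    and wsum: "\<And>k. (\<Sum>i<d. w k $ i) = 1"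
    and Cw: "\<And>k i. i < d \<Longrightarrow> (C *\<^sub>v w k) $ i = T k * w k $ i - \<epsilon> k"
    and \<epsilon>: "\<And>k. \<epsilon> k > 0" and Tlim: "T \<longlonglongrightarrow> spec_rad C" and \<epsilon>lim: "\<epsilon> \<longlonglongrightarrow> 0"
    using normalized_neumann_seq[OF C d nn] by blast
  have wpos': "w k $ i > 0" if "i < d" for k i using pos_vecD[OF wpos] carrier_vecD[OF wc] that by auto
  have "\<bar>w k $ i\<bar> \<le> 1" if "i < d" for k i
  proof -
    have "w k $ i \<le> (\<Sum>i<d. w k $ i)"
      using wpos' that by (intro member_le_sum) (auto intro: less_imp_le)
    then show ?thesis using wpos'[OF that, of k] wsum[of k] by simp
  qed
  then obtain r where r: "strict_mono r" "\<And>i. i < d \<Longrightarrow> convergent (\<lambda>k. w (r k) $ i)"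
    using convergent_subseq_bounded_family[of d "\<lambda>k i. w k $ i" 1] by blast
  define y where "y = vec d (\<lambda>i. lim (\<lambda>k. w (r k) $ i))"
  have yc: "y \<in> carrier_vec d" unfolding y_def by simp
  have conv: "(\<lambda>k. w (r k) $ i) \<longlonglongrightarrow> y $ i" if "i < d" for i
    using r(2)[OF that] that unfolding y_def by (simp add: convergent_LIMSEQ_iff)
  have Tr: "(\<lambda>k. T (r k)) \<longlonglongrightarrow> spec_rad C" and \<epsilon>r: "(\<lambda>k. \<epsilon> (r k)) \<longlonglongrightarrow> 0"
    using LIMSEQ_subseq_LIMSEQ[OF Tlim r(1)] LIMSEQ_subseq_LIMSEQ[OF \<epsilon>lim r(1)] by (simp_all add: o_def)
  show thesis
  proof (rule that[of "\<lambda>k. w (r k)" "\<lambda>k. T (r k)" y])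
    show "(C *\<^sub>v w (r k)) $ i \<le> T (r k) * w (r k) $ i" if "i < d" for k i
      using Cw[OF that] \<epsilon>[of "r k"] by simp
    have "y $ i \<ge> 0" if "i < d" for i
      using wpos' that by (intro LIMSEQ_le_const[OF conv[OF that]]) (auto intro: less_imp_le)
    then show "nonneg_vec y" unfolding nonneg_vec_def using yc by simp
    have "(\<lambda>k. \<Sum>i<d. w (r k) $ i) \<longlonglongrightarrow> (\<Sum>i<d. y $ i)"
      by (rule tendsto_sum) (use conv in auto)
    moreover have "(\<lambda>k. \<Sum>i<d. w (r k) $ i) \<longlonglongrightarrow> 1" using wsum by simp
    ultimately show "(\<Sum>i<d. y $ i) = 1" using LIMSEQ_unique by blast
    show "C *\<^sub>v y = spec_rad C \<cdot>\<^sub>v y"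
      using Cw by (intro eigenvector_of_approx[OF C wc yc _ conv Tr \<epsilon>r]) auto
  qed (use wc wpos Tr conv yc in simp_all)
qed

section \<open>Column selections and the ratio \<open>r(A,B,x)\<close>\<close>

lemma bij_betw_pick:
  assumes "finite K"
  shows "bij_betw (pick K) {..<card K} K"
proof (rule bij_betw_imageI)
  show "inj_on (pick K) {..<card K}"
  proof (rule inj_onI)
    fix x y assume xy: "x \<in> {..<card K}" "y \<in> {..<card K}" "pick K x = pick K y"
    show "x = y"
    proof (rule ccontr)
      assume "x \<noteq> y"
      then consider "x < y" | "y < x" by linarith
      then show False using xy pick_mono_le[of y K x] pick_mono_le[of x K y] by cases auto
    qed
  qed
  show "pick K ` {..<card K} = K"
  proof
    show "pick K ` {..<card K} \<subseteq> K" using pick_in_set_le by auto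
    show "K \<subseteq> pick K ` {..<card K}"
    proof
      fix j assume j: "j \<in> K"
      have "card {a\<in>K. a < j} < card K"
        using j assms by (intro psubset_card_mono) auto
      then show "j \<in> pick K ` {..<card K}"
        by (intro image_eqI[of _ _ "card {a\<in>K. a < j}"]) (simp_all add: pick_card_in_set[OF j])
    qed
  qed
qed

lemma pick_lessThan:
  assumes "i < m"
  shows "pick {..<m} i = i"
proof -
  have "{a\<in>{..<m}. a < i} = {..<i}" using assms by auto
  then show ?thesis using pick_card_in_set[of i "{..<m}"] assms by simp
qed

lemma cols_sub_carrier:
  assumes "K \<subseteq> {..<n}" "X \<in> carrier_mat r n"
  shows "cols_sub X K \<in> carrier_mat r (card K)"
proof -
  have "{j. j < n \<and> j \<in> K} = K" "{i. i < r \<and> i \<in> {..<r}} = {..<r}" using assms(1) by auto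
  then show ?thesis using assms(2) unfolding cols_sub_def carrier_mat_def by (simp add: dim_submatrix)
qed

lemma cols_sub_nth:
  assumes "K \<subseteq> {..<n}" "X \<in> carrier_mat r n" "i < r" "c < card K"
  shows "cols_sub X K $$ (i,c) = X $$ (i, pick K c)"
proof -
  have "{j. j < dim_col X \<and> j \<in> K} = K" "{i. i < dim_row X \<and> i \<in> {..<dim_row X}} = {..<r}"
    using assms(1,2) by auto
  then have "submatrix X {..<dim_row X} K $$ (i,c) = X $$ (pick {..<dim_row X} i, pick K c)"
    using assms by (intro submatrix_index) auto
  then show ?thesis using assms(2,3) by (simp add: cols_sub_def pick_lessThan)
qed

lemma the_mat_inverse_eqI:
  fixes A X :: "'a::field mat"
  assumes A: "A \<in> carrier_mat d d" and X: "X \<in> carrier_mat d d" and XA: "X * A = 1\<^sub>m d"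
  shows "the (mat_inverse A) = X"
proof -
  have AX: "A * X = 1\<^sub>m d" by (rule mat_mult_left_right_inverse[OF X A XA])
  then have "A \<in> Units (ring_mat TYPE('a) d ())"
    unfolding Units_def ring_mat_def using A X XA by auto
  then obtain Y where Y: "mat_inverse A = Some Y"
    using mat_inverse(1)[OF A, of "()"] by (cases "mat_inverse A") auto
  then have AY: "A * Y = 1\<^sub>m d" "Y \<in> carrier_mat d d" using mat_inverse(2)[OF A] by auto
  have "Y = (X * A) * Y" using AY(2) by (simp add: XA)
  also have "\<dots> = X * (A * Y)" using A X AY by (simp add: assoc_mult_mat[of _ d d _ d _ d])
  finally show ?thesis using Y AY X by simp
qed

lemma ratio_e_le: "b > 0 \<Longrightarrow> a \<le> c * b \<Longrightarrow> ratio_e a b \<le> ereal c"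
  unfolding ratio_e_def by (simp add: pos_divide_le_eq)

lemma ratio_e_le_r_AB: "i < dim_row A \<Longrightarrow> ratio_e ((A *\<^sub>v x) $ i) ((B *\<^sub>v x) $ i) \<le> r_AB A B x"
  unfolding r_AB_def by (intro SUP_upper) auto

lemma r_AB_le:
  "(\<And>i. i < dim_row A \<Longrightarrow> ratio_e ((A *\<^sub>v x) $ i) ((B *\<^sub>v x) $ i) \<le> r) \<Longrightarrow> r_AB A B x \<le> r"
  unfolding r_AB_def by (intro SUP_least) auto

lemma rho_AB_le_r_AB: "dim_vec x = dim_col A \<Longrightarrow> pos_vec x \<Longrightarrow> rho_AB A B \<le> r_AB A B x"
  unfolding rho_AB_def by (intro INF_lower) auto

lemma sum_weighted_le_imp_ex_le:
  fixes a b w :: "'a \<Rightarrow> real"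
  assumes "finite S" "S \<noteq> {}" "\<And>j. j \<in> S \<Longrightarrow> w j > 0"
    and "(\<Sum>j\<in>S. a j * w j) \<le> s * (\<Sum>j\<in>S. b j * w j)"
  shows "\<exists>j\<in>S. a j \<le> s * b j"
proof (rule ccontr)
  assume "\<not> ?thesis"
  then have "(\<Sum>j\<in>S. s * b j * w j) < (\<Sum>j\<in>S. a j * w j)"
    using assms(1-3) by (intro sum_strict_mono) auto
  then show False using assms(4) by (simp add: sum_distrib_left mult.assoc)
qed

lemma rtrancl_crossing_edge:
  assumes "(a, b) \<in> E\<^sup>*" "a \<notin> S" "b \<in> S"
  shows "\<exists>a' b'. (a', b') \<in> E \<and> a' \<notin> S \<and> b' \<in> S"
  using assms
proof (induction rule: rtrancl_induct)
  case (step y z)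
  then show ?case by (cases "y \<in> S") blast+
qed simp

lemma r_AB_eigen:
  assumes eq: "A *\<^sub>v y = c \<cdot>\<^sub>v (B *\<^sub>v y)" and c: "c \<ge> 0"
    and nonneg: "\<And>i. i < dim_row A \<Longrightarrow> (B *\<^sub>v y) $ i \<ge> 0"
    and i0: "i0 < dim_row A" "(B *\<^sub>v y) $ i0 > 0"
  shows "r_AB A B y = ereal c"
proof -
  have Ai: "(A *\<^sub>v y) $ i = c * (B *\<^sub>v y) $ i" if "i < dim_row A" for i
    using arg_cong[OF eq, of "\<lambda>v. v $ i"] arg_cong[OF eq, of dim_vec] that by simp
  have "r_AB A B y \<le> ereal c"
  proof (rule r_AB_le)
    fix i assume i: "i < dim_row A"
    show "ratio_e ((A *\<^sub>v y) $ i) ((B *\<^sub>v y) $ i) \<le> ereal c"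
      using Ai[OF i] nonneg[OF i] c by (cases "(B *\<^sub>v y) $ i = 0") (auto simp: ratio_e_def)
  qed
  moreover have "ratio_e ((A *\<^sub>v y) $ i0) ((B *\<^sub>v y) $ i0) = ereal c"
    using Ai[OF i0(1)] i0(2) by (simp add: ratio_e_def)
  then have "ereal c \<le> r_AB A B y" using ratio_e_le_r_AB[OF i0(1), where B = B and x = y] by simp
  ultimately show ?thesis by simp
qed

lemma r_AB_eq_infinity:
  assumes "i < dim_row A" "(B *\<^sub>v z) $ i = 0" "(A *\<^sub>v z) $ i > 0"
  shows "r_AB A B z = \<infinity>"
  using ratio_e_le_r_AB[OF assms(1), where B = B and x = z] assms(2,3) by (simp add: ratio_e_def)

lemma irreducible_mat_crossing_edge:
  assumes "irreducible_mat C" "c0 < dim_row C" "c1 < dim_row C" "c0 \<notin> S" "c1 \<in> S"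
  obtains a b where "a < dim_row C" "b < dim_row C" "C $$ (a,b) > 0" "a \<notin> S" "b \<in> S"
  using rtrancl_crossing_edge[of c0 c1 _ S] assms that unfolding irreducible_mat_def by blast

section \<open>WN-pairs\<close>

locale wn_pair =
  fixes m n :: nat and A B :: "real mat"
  assumes m_pos: "0 < m" and WN: "WN_pair m n A B"
begin

lemma A_carrier: "A \<in> carrier_mat m n" and B_carrier: "B \<in> carrier_mat m n"
  and A_nonneg: "nonneg_mat A" and B_nonneg: "nonneg_mat B"
  and B_row_nonzero: "\<And>i. i < m \<Longrightarrow> \<exists>j<n. B $$ (i,j) \<noteq> 0"
  and B_col_unique: "\<And>j. j < n \<Longrightarrow> \<exists>!i. i < m \<and> B $$ (i,j) > 0"
  using WN unfolding WN_pair_def by blast+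

lemma A_nonneg_nth: "i < m \<Longrightarrow> j < n \<Longrightarrow> A $$ (i,j) \<ge> 0"
  using nonneg_matD[OF A_nonneg] A_carrier by simp

lemma B_nonneg_nth: "i < m \<Longrightarrow> j < n \<Longrightarrow> B $$ (i,j) \<ge> 0"
  using nonneg_matD[OF B_nonneg] B_carrier by simp

definition row_of :: "nat \<Rightarrow> nat" where
  "row_of j = (THE i. i < m \<and> B $$ (i,j) > 0)"

lemma row_of: "j < n \<Longrightarrow> row_of j < m \<and> B $$ (row_of j, j) > 0"
  unfolding row_of_def using theI'[OF B_col_unique] by blast

lemma B_pos_iff: "j < n \<Longrightarrow> i < m \<Longrightarrow> B $$ (i,j) > 0 \<longleftrightarrow> i = row_of j"
  using B_col_unique row_of by blast

lemma B_eq_0_iff: "j < n \<Longrightarrow> i < m \<Longrightarrow> B $$ (i,j) = 0 \<longleftrightarrow> i \<noteq> row_of j"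
  using B_pos_iff B_nonneg_nth by (metis order_less_le)

lemma ex_row_of_eq: "i < m \<Longrightarrow> \<exists>j<n. row_of j = i"
  using B_row_nonzero B_eq_0_iff by blast

lemma monomial_cols_sub_B_iff:
  assumes K: "K \<subseteq> {..<n}" "card K = m"
  shows "monomial_mat (cols_sub B K) \<longleftrightarrow> (\<forall>i<m. \<exists>!c. c < m \<and> row_of (pick K c) = i)"
proof -
  have fin: "finite K" using K(1) finite_subset by blast
  have pick: "pick K c < n" if "c < m" for c
    using bij_betw_apply[OF bij_betw_pick[OF fin]] K that by auto
  have car: "cols_sub B K \<in> carrier_mat m m" using cols_sub_carrier[OF K(1) B_carrier] K by simp
  have nth: "cols_sub B K $$ (i,c) = B $$ (i, pick K c)" if "i < m" "c < m" for i c
    using cols_sub_nth[OF K(1) B_carrier that(1)] K that by simp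
  have dims: "dim_row (cols_sub B K) = m" "dim_col (cols_sub B K) = m" using car by auto
  have nonneg: "nonneg_mat (cols_sub B K)"
    unfolding nonneg_mat_def dims using nth pick B_nonneg_nth by simp
  have cols: "\<exists>!i. i < m \<and> cols_sub B K $$ (i,c) > 0" if "c < m" for c
  proof (rule ex1I[of _ "row_of (pick K c)"])
    show "row_of (pick K c) < m \<and> cols_sub B K $$ (row_of (pick K c), c) > 0"
      using row_of[OF pick[OF that]] nth that by simp
    fix i assume "i < m \<and> cols_sub B K $$ (i,c) > 0"
    then show "i = row_of (pick K c)" using nth[of i c] B_pos_iff[OF pick[OF that], of i] that by simp
  qed
  have pos_iff: "c < m \<and> cols_sub B K $$ (i,c) > 0 \<longleftrightarrow> c < m \<and> row_of (pick K c) = i"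
    if "i < m" for i c
  proof (cases "c < m")
    case True
    then show ?thesis using nth[OF that True] B_pos_iff[OF pick[OF True] that] by auto
  qed simp
  have rows: "(\<exists>!c. c < m \<and> cols_sub B K $$ (i,c) > 0) \<longleftrightarrow> (\<exists>!c. c < m \<and> row_of (pick K c) = i)"
    if "i < m" for i
    by (simp only: pos_iff[OF that])
  show ?thesis unfolding monomial_mat_def dims using nonneg cols rows by simp
qed

lemma inj_on_row_of_iff:
  assumes K: "K \<subseteq> {..<n}" "card K = m"
  shows "inj_on row_of K \<longleftrightarrow> (\<forall>i<m. \<exists>!c. c < m \<and> row_of (pick K c) = i)"
proof -
  have bij: "bij_betw (pick K) {..<m} K"
    using bij_betw_pick[of K] K finite_subset[OF K(1)] by simp
  have rows: "row_of ` K \<subseteq> {..<m}" using K row_of by auto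
  show ?thesis
  proof
    assume inj: "inj_on row_of K"
    have "row_of ` K = {..<m}" using rows card_image[OF inj] K by (intro card_subset_eq) auto
    then have bij': "bij_betw (row_of \<circ> pick K) {..<m} {..<m}"
      using bij_betw_trans[OF bij bij_betw_imageI[OF inj]] by blast
    show "\<forall>i<m. \<exists>!c. c < m \<and> row_of (pick K c) = i"
    proof (intro allI impI)
      fix i assume "i < m"
      then have "i \<in> (row_of \<circ> pick K) ` {..<m}" using bij_betw_imp_surj_on[OF bij'] by simp
      then obtain c where c: "c < m" "row_of (pick K c) = i" by auto
      show "\<exists>!c. c < m \<and> row_of (pick K c) = i"
      proof (rule ex1I[of _ c])
        fix c' assume "c' < m \<and> row_of (pick K c') = i"
        then show "c' = c" using inj_onD[OF bij_betw_imp_inj_on[OF bij']] c by force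
      qed (use c in simp)
    qed
  next
    assume uniq: "\<forall>i<m. \<exists>!c. c < m \<and> row_of (pick K c) = i"
    show "inj_on row_of K"
    proof (rule inj_onI)
      fix j j' assume j: "j \<in> K" "j' \<in> K" "row_of j = row_of j'"
      obtain c c' where c: "c < m" "j = pick K c" "c' < m" "j' = pick K c'"
        using j bij_betw_imp_surj_on[OF bij] by blast
      have "row_of j < m" using rows j by blast
      then have "\<exists>!c. c < m \<and> row_of (pick K c) = row_of j" using uniq by simp
      then have "c = c'" using c j(3) by metis
      then show "j = j'" using c by simp
    qed
  qed
qed

lemma M_set_iff: "K \<in> M_set B \<longleftrightarrow> K \<subseteq> {..<n} \<and> card K = m \<and> inj_on row_of K"
  using monomial_cols_sub_B_iff inj_on_row_of_iff B_carrier unfolding M_set_def by auto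

lemma M_setD:
  assumes "K \<in> M_set B"
  shows "K \<subseteq> {..<n}" "card K = m" "finite K" "inj_on row_of K"
  using assms finite_subset unfolding M_set_iff by auto

lemma M_set_finite: "finite (M_set B)"
  by (rule finite_subset[of _ "Pow {..<n}"]) (auto simp: M_set_iff)

lemma image_in_M_set:
  assumes k: "\<And>l. l < m \<Longrightarrow> k l < n \<and> row_of (k l) = l"
  shows "k ` {..<m} \<in> M_set B"
proof -
  have "inj_on k {..<m}" by (rule inj_onI) (metis k lessThan_iff)
  then show ?thesis unfolding M_set_iff using k by (auto simp: card_image inj_on_def)
qed

lemma M_set_nonempty: "M_set B \<noteq> {}"
proof -
  define k where "k l = (SOME j. j < n \<and> row_of j = l)" for l
  have "k l < n \<and> row_of (k l) = l" if "l < m" for l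
    unfolding k_def by (rule someI_ex) (use ex_row_of_eq[OF that] in auto)
  then show ?thesis using image_in_M_set by blast
qed

text \<open>Position \<open>c < m\<close> of \<open>K \<in> M(B)\<close> holds the column \<open>pick K c\<close>, whose positive entry of \<open>B\<close>
  lies in row \<open>row_idx K c\<close>; \<open>col_idx K\<close> is the inverse permutation.\<close>
definition row_idx :: "nat set \<Rightarrow> nat \<Rightarrow> nat" where
  "row_idx K c = row_of (pick K c)"

definition col_idx :: "nat set \<Rightarrow> nat \<Rightarrow> nat" where
  "col_idx K = the_inv_into {..<m} (row_idx K)"

context
  fixes K assumes K: "K \<in> M_set B"
begin

lemma bij_betw_pick_M_set: "bij_betw (pick K) {..<m} K"
  using bij_betw_pick[OF M_setD(3)[OF K]] M_setD(2)[OF K] by simp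

lemma pick_in_M_set: "c < m \<Longrightarrow> pick K c \<in> K \<and> pick K c < n"
  using bij_betw_apply[OF bij_betw_pick_M_set] M_setD(1)[OF K] by auto

lemma ex_pick_eq: "j \<in> K \<Longrightarrow> \<exists>c<m. j = pick K c"
  using bij_betw_imp_surj_on[OF bij_betw_pick_M_set] by (metis imageE lessThan_iff)

lemma bij_betw_row_idx: "bij_betw (row_idx K) {..<m} {..<m}"
proof -
  have "row_of ` K = {..<m}"
    using M_setD[OF K] row_of card_image[of row_of K] by (intro card_subset_eq) auto
  then have "bij_betw row_of K {..<m}" using M_setD(4)[OF K] by (simp add: bij_betw_def)
  from bij_betw_trans[OF bij_betw_pick_M_set this] show ?thesis by (simp add: row_idx_def[abs_def] comp_def)
qed

lemma row_idx_less: "c < m \<Longrightarrow> row_idx K c < m"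
  using bij_betw_apply[OF bij_betw_row_idx] by simp

lemma row_idx_inj: "c < m \<Longrightarrow> c' < m \<Longrightarrow> row_idx K c = row_idx K c' \<Longrightarrow> c = c'"
  using bij_betw_imp_inj_on[OF bij_betw_row_idx] by (simp add: inj_on_def)

lemma col_idx_less: "i < m \<Longrightarrow> col_idx K i < m"
  using bij_betw_apply[OF bij_betw_the_inv_into[OF bij_betw_row_idx]] by (simp add: col_idx_def)

lemma row_idx_col_idx: "i < m \<Longrightarrow> row_idx K (col_idx K i) = i"
  using f_the_inv_into_f_bij_betw[OF bij_betw_row_idx] by (simp add: col_idx_def)

lemma col_idx_row_idx: "c < m \<Longrightarrow> col_idx K (row_idx K c) = c"
  using the_inv_into_f_f[OF bij_betw_imp_inj_on[OF bij_betw_row_idx]] by (simp add: col_idx_def)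

lemma B_pick_pos: "c < m \<Longrightarrow> B $$ (row_idx K c, pick K c) > 0"
  using row_of pick_in_M_set unfolding row_idx_def by blast

lemma B_pick_eq_0: "i < m \<Longrightarrow> c < m \<Longrightarrow> i \<noteq> row_idx K c \<Longrightarrow> B $$ (i, pick K c) = 0"
  using B_eq_0_iff pick_in_M_set unfolding row_idx_def by blast

lemma sum_row_idx: "(\<Sum>c<m. f (row_idx K c)) = (\<Sum>i<m. f i)"
  using sum.reindex_bij_betw[OF bij_betw_row_idx] .

end

text \<open>\<open>card {a\<in>K. a < j}\<close> is the position of \<open>j\<close> in \<open>K\<close>, i.e. the inverse of \<open>pick K\<close>.\<close>
definition extend_vec :: "nat set \<Rightarrow> real vec \<Rightarrow> real \<Rightarrow> real vec" where
  "extend_vec K v \<delta> = vec n (\<lambda>j. if j \<in> K then v $ card {a\<in>K. a < j} else \<delta>)"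

lemma dim_extend_vec [simp]: "dim_vec (extend_vec K v \<delta>) = n"
  by (simp add: extend_vec_def)

lemma extend_vec_out: "j < n \<Longrightarrow> j \<notin> K \<Longrightarrow> extend_vec K v \<delta> $ j = \<delta>"
  by (simp add: extend_vec_def)

definition B_K_inv :: "nat set \<Rightarrow> real mat" where
  "B_K_inv K = mat m m (\<lambda>(c,i). if row_idx K c = i then 1 / B $$ (i, pick K c) else 0)"

context
  fixes K assumes K: "K \<in> M_set B"
begin

lemma cols_sub_carrier_M_set: "X \<in> carrier_mat m n \<Longrightarrow> cols_sub X K \<in> carrier_mat m m"
  using cols_sub_carrier[OF M_setD(1)[OF K]] M_setD(2)[OF K] by simp

lemma cols_sub_nth_M_set: "X \<in> carrier_mat m n \<Longrightarrow> i < m \<Longrightarrow> c < m \<Longrightarrow> cols_sub X K $$ (i,c) = X $$ (i, pick K c)"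
  using cols_sub_nth[OF M_setD(1)[OF K]] M_setD(2)[OF K] by simp

lemma B_K_inv_carrier: "B_K_inv K \<in> carrier_mat m m"
  by (simp add: B_K_inv_def)

lemma B_K_inv_mult_nth:
  assumes "X \<in> carrier_mat m n" "c < m" "b < m"
  shows "(B_K_inv K * cols_sub X K) $$ (c,b) = X $$ (row_idx K c, pick K b) / B $$ (row_idx K c, pick K c)"
proof -
  have "(B_K_inv K * cols_sub X K) $$ (c,b) = (\<Sum>i<m. B_K_inv K $$ (c,i) * cols_sub X K $$ (i,b))"
    using assms by (intro mult_mat_nth[OF B_K_inv_carrier cols_sub_carrier_M_set])
  also have "\<dots> = (\<Sum>i<m. if row_idx K c = i then X $$ (i, pick K b) / B $$ (i, pick K c) else 0)"
    using assms by (intro sum.cong) (auto simp: B_K_inv_def cols_sub_nth_M_set)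
  also have "\<dots> = X $$ (row_idx K c, pick K b) / B $$ (row_idx K c, pick K c)"
    using row_idx_less[OF K assms(2)] by (simp add: sum.delta)
  finally show ?thesis .
qed

lemma B_K_inv_mult: "B_K_inv K * cols_sub B K = 1\<^sub>m m"
proof (rule eq_matI)
  fix c c' assume "c < dim_row (1\<^sub>m m)" "c' < dim_col (1\<^sub>m m)"
  then have cc: "c < m" "c' < m" by auto
  show "(B_K_inv K * cols_sub B K) $$ (c,c') = 1\<^sub>m m $$ (c,c')"
    unfolding B_K_inv_mult_nth[OF B_carrier cc]
    using B_pick_pos[OF K cc(1)] B_pick_eq_0[OF K row_idx_less[OF K cc(1)] cc(2)] row_idx_inj[OF K cc] cc
    by (cases "c = c'") auto
qed (use cols_sub_carrier_M_set[OF B_carrier] in \<open>simp_all add: B_K_inv_def\<close>)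

lemma C_K_eq: "C_K A B K = B_K_inv K * cols_sub A K"
  unfolding C_K_def using cols_sub_carrier_M_set[OF B_carrier] B_K_inv_mult
  by (subst the_mat_inverse_eqI) (auto simp: B_K_inv_def)

lemma C_K_carrier: "C_K A B K \<in> carrier_mat m m"
  unfolding C_K_eq using cols_sub_carrier_M_set[OF A_carrier] B_K_inv_carrier by simp

lemma C_K_nth:
  "c < m \<Longrightarrow> b < m \<Longrightarrow> C_K A B K $$ (c,b) = A $$ (row_idx K c, pick K b) / B $$ (row_idx K c, pick K c)"
  unfolding C_K_eq by (rule B_K_inv_mult_nth[OF A_carrier])

lemma C_K_nonneg: "nonneg_mat (C_K A B K)"
  unfolding nonneg_mat_def using C_K_carrier C_K_nth row_idx_less[OF K] pick_in_M_set[OF K]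
    A_nonneg_nth B_pick_pos[OF K]
  by (auto intro!: divide_nonneg_pos)

lemma extend_vec_pick: "c < m \<Longrightarrow> extend_vec K v \<delta> $ pick K c = v $ c"
  using pick_in_M_set[OF K] card_pick_le[of c K] M_setD(2)[OF K] by (simp add: extend_vec_def)

lemma extend_vec_pos:
  assumes "v \<in> carrier_vec m" "pos_vec v" "\<delta> > 0"
  shows "pos_vec (extend_vec K v \<delta>)"
  unfolding pos_vec_def
proof (intro allI impI)
  fix j assume "j < dim_vec (extend_vec K v \<delta>)"
  then have j: "j < n" by simp
  show "extend_vec K v \<delta> $ j > 0"
  proof (cases "j \<in> K")
    case True
    then obtain c where "c < m" "j = pick K c" using ex_pick_eq[OF K] by blast
    then show ?thesis using extend_vec_pick pos_vecD[OF assms(2)] assms(1) by auto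
  qed (use extend_vec_out j assms(3) in simp)
qed

lemma mult_extend_vec:
  assumes X: "X \<in> carrier_mat m n" and i: "i < m"
  shows "(X *\<^sub>v extend_vec K v \<delta>) $ i =
    (\<Sum>c<m. X $$ (i, pick K c) * v $ c) + \<delta> * (\<Sum>j\<in>{..<n}-K. X $$ (i,j))"
proof -
  have "(X *\<^sub>v extend_vec K v \<delta>) $ i = (\<Sum>j<n. X $$ (i,j) * extend_vec K v \<delta> $ j)"
    by (rule mult_mat_vec_nth[OF X _ i]) simp
  also have "\<dots> = (\<Sum>j\<in>K. X $$ (i,j) * extend_vec K v \<delta> $ j)
      + (\<Sum>j\<in>{..<n}-K. X $$ (i,j) * extend_vec K v \<delta> $ j)"
    using sum.subset_diff[of K "{..<n}"] M_setD(1)[OF K] by (simp add: add.commute)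
  also have "(\<Sum>j\<in>K. X $$ (i,j) * extend_vec K v \<delta> $ j) = (\<Sum>c<m. X $$ (i, pick K c) * v $ c)"
    using sum.reindex_bij_betw[OF bij_betw_pick_M_set[OF K], where g = "\<lambda>j. X $$ (i,j) * extend_vec K v \<delta> $ j"]
    by (simp add: extend_vec_pick)
  also have "(\<Sum>j\<in>{..<n}-K. X $$ (i,j) * extend_vec K v \<delta> $ j) = \<delta> * (\<Sum>j\<in>{..<n}-K. X $$ (i,j))"
    by (simp add: extend_vec_out sum_distrib_left ac_simps)
  finally show ?thesis .
qed

lemma B_mult_extend_vec:
  assumes i: "i < m"
  shows "(B *\<^sub>v extend_vec K v \<delta>) $ i =
    B $$ (i, pick K (col_idx K i)) * v $ col_idx K i + \<delta> * (\<Sum>j\<in>{..<n}-K. B $$ (i,j))"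
proof -
  have "(\<Sum>c<m. B $$ (i, pick K c) * v $ c) = (\<Sum>c<m. if c = col_idx K i then B $$ (i, pick K c) * v $ c else 0)"
  proof (intro sum.cong refl)
    fix c assume c: "c \<in> {..<m}"
    show "B $$ (i, pick K c) * v $ c = (if c = col_idx K i then B $$ (i, pick K c) * v $ c else 0)"
    proof (cases "c = col_idx K i")
      case False
      then have "i \<noteq> row_idx K c" using col_idx_row_idx[OF K] c by auto
      then show ?thesis using B_pick_eq_0[OF K i] False c by simp
    qed simp
  qed
  then show ?thesis using mult_extend_vec[OF B_carrier i] col_idx_less[OF K i] by simp
qed

text \<open>Since \<open>A\<^sub>K = B\<^sub>K C\<^sub>K\<close> and row \<open>i\<close> of \<open>B\<^sub>K\<close> is nonzero only in position \<open>col_idx K i\<close>.\<close>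
lemma A_mult_extend_vec:
  assumes v: "v \<in> carrier_vec m" and i: "i < m"
  shows "(A *\<^sub>v extend_vec K v \<delta>) $ i =
    B $$ (i, pick K (col_idx K i)) * (C_K A B K *\<^sub>v v) $ col_idx K i + \<delta> * (\<Sum>j\<in>{..<n}-K. A $$ (i,j))"
proof -
  define c where "c = col_idx K i"
  have c: "c < m" "row_idx K c = i" using col_idx_less[OF K i] row_idx_col_idx[OF K i] by (auto simp: c_def)
  have "(C_K A B K *\<^sub>v v) $ c = (\<Sum>b<m. A $$ (i, pick K b) * v $ b) / B $$ (i, pick K c)"
    using mult_mat_vec_nth[OF C_K_carrier _ c(1)] v c
    by (simp add: C_K_nth sum_divide_distrib)
  then have "(\<Sum>b<m. A $$ (i, pick K b) * v $ b) = B $$ (i, pick K c) * (C_K A B K *\<^sub>v v) $ c"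
    using B_pick_pos[OF K c(1)] c(2) by simp
  then show ?thesis using mult_extend_vec[OF A_carrier i] by (simp add: c_def)
qed

lemma B_mult_extend_vec_mono:
  assumes "i < m" "0 \<le> \<delta>"
  shows "(B *\<^sub>v extend_vec K v 0) $ i \<le> (B *\<^sub>v extend_vec K v \<delta>) $ i"
  using B_mult_extend_vec[OF assms(1)] B_nonneg_nth[OF assms(1)] assms(2)
  by (auto intro!: mult_nonneg_nonneg sum_nonneg)

lemma A_mult_extend_vec_le:
  assumes v: "v \<in> carrier_vec m" and le: "\<And>c. c < m \<Longrightarrow> (C_K A B K *\<^sub>v v) $ c \<le> s * v $ c"
    and i: "i < m" and \<delta>: "0 \<le> \<delta>"
  shows "(A *\<^sub>v extend_vec K v \<delta>) $ i \<le> s * (B *\<^sub>v extend_vec K v 0) $ i + \<delta> * (\<Sum>i<m. \<Sum>j<n. A $$ (i,j))"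
proof -
  let ?c = "col_idx K i"
  have "B $$ (i, pick K ?c) * (C_K A B K *\<^sub>v v) $ ?c \<le> B $$ (i, pick K ?c) * (s * v $ ?c)"
    using B_pick_pos[OF K col_idx_less[OF K i]] row_idx_col_idx[OF K i]
    by (intro mult_left_mono[OF le[OF col_idx_less[OF K i]]]) simp
  moreover have "(\<Sum>j\<in>{..<n}-K. A $$ (i,j)) \<le> (\<Sum>j<n. A $$ (i,j))"
    using A_nonneg_nth[OF i] by (intro sum_mono2) auto
  then have "\<delta> * (\<Sum>j\<in>{..<n}-K. A $$ (i,j)) \<le> \<delta> * (\<Sum>i<m. \<Sum>j<n. A $$ (i,j))"
    using A_nonneg_nth i \<delta>
    by (intro mult_left_mono order.trans[OF _ member_le_sum[of i "{..<m}" "\<lambda>i. \<Sum>j<n. A $$ (i,j)"]])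
      (auto intro: sum_nonneg)
  ultimately show ?thesis
    using A_mult_extend_vec[OF v i, of \<delta>] B_mult_extend_vec[OF i, of v 0] by (simp add: ac_simps)
qed

text \<open>Padding with \<open>\<delta>\<close> off \<open>K\<close> changes \<open>A x\<close> by \<open>O(\<delta>)\<close>, while \<open>B x\<close> stays bounded away from \<open>0\<close>
  because every row of \<open>B\<close> has its positive entry in a column of \<open>K\<close>.\<close>
lemma r_AB_extend_vec_le:
  assumes v: "v \<in> carrier_vec m" "pos_vec v"
    and le: "\<And>c. c < m \<Longrightarrow> (C_K A B K *\<^sub>v v) $ c \<le> s * v $ c" and s: "s \<ge> 0" and eta: "\<eta> > 0"
  obtains \<delta>0 where "\<delta>0 > 0" "\<And>\<delta>. 0 < \<delta> \<Longrightarrow> \<delta> \<le> \<delta>0 \<Longrightarrow> r_AB A B (extend_vec K v \<delta>) \<le> ereal (s + \<eta>)"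
proof -
  define \<beta> where "\<beta> i = (B *\<^sub>v extend_vec K v 0) $ i" for i
  have \<beta>: "\<beta> i > 0" if "i < m" for i
    using B_mult_extend_vec[OF that] B_pick_pos[OF K col_idx_less[OF K that]] row_idx_col_idx[OF K that]
      pos_vecD[OF v(2)] col_idx_less[OF K that] v(1)
    by (simp add: \<beta>_def)
  define \<beta>m where "\<beta>m = Min (\<beta> ` {..<m})"
  have fin: "finite (\<beta> ` {..<m})" "\<beta> ` {..<m} \<noteq> {}" using m_pos by auto
  have \<beta>m: "0 < \<beta>m" "\<And>i. i < m \<Longrightarrow> \<beta>m \<le> \<beta> i"
    using Min_in[OF fin] Min_le[OF fin(1)] \<beta> unfolding \<beta>m_def by auto
  define SA where "SA = (\<Sum>i<m. \<Sum>j<n. A $$ (i,j))"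
  have SA: "SA \<ge> 0" unfolding SA_def using A_nonneg_nth by (auto intro!: sum_nonneg)
  define \<delta>0 where "\<delta>0 = \<eta> * \<beta>m / (SA + 1)"
  have \<delta>0: "\<delta>0 > 0" "\<delta>0 * SA \<le> \<eta> * \<beta>m"
    using eta \<beta>m SA by (auto simp: \<delta>0_def field_simps)
  have "r_AB A B (extend_vec K v \<delta>) \<le> ereal (s + \<eta>)" if \<delta>: "0 < \<delta>" "\<delta> \<le> \<delta>0" for \<delta>
  proof (rule r_AB_le)
    fix i assume "i < dim_row A"
    then have i: "i < m" using A_carrier by simp
    let ?x = "extend_vec K v \<delta>"
    have Bx: "\<beta> i \<le> (B *\<^sub>v ?x) $ i" unfolding \<beta>_def using B_mult_extend_vec_mono[OF i] \<delta> by simp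
    have "(A *\<^sub>v ?x) $ i \<le> s * \<beta> i + \<delta> * SA"
      using A_mult_extend_vec_le[OF v(1) le i] \<delta> by (simp add: \<beta>_def SA_def)
    also have "\<dots> \<le> s * (B *\<^sub>v ?x) $ i + \<eta> * (B *\<^sub>v ?x) $ i"
      using mult_right_mono[OF \<delta>(2) SA] \<delta>0(2) mult_left_mono[OF Bx s]
        mult_left_mono[OF order.trans[OF \<beta>m(2)[OF i] Bx], of \<eta>] eta
      by linarith
    finally show "ratio_e ((A *\<^sub>v ?x) $ i) ((B *\<^sub>v ?x) $ i) \<le> ereal (s + \<eta>)"
      using Bx \<beta>[OF i] by (intro ratio_e_le) (auto simp: algebra_simps)
  qed
  then show thesis using that \<delta>0(1) by blast
qed

lemma rho_AB_le_spec_rad_C_K: "rho_AB A B \<le> ereal (spec_rad (C_K A B K))"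
proof (rule ereal_le_epsilon2)
  fix e :: real assume e: "0 < e"
  let ?C = "C_K A B K"
  define t where "t = spec_rad ?C + e / 2"
  have t: "spec_rad ?C < t" "t \<ge> 0"
    unfolding t_def using e spec_rad_nonneg[OF C_K_carrier m_pos] by auto
  let ?z = "neumann_vec ?C t"
  have z: "?z \<in> carrier_vec m" "pos_vec ?z"
    using neumann_vec_carrier[OF C_K_carrier m_pos C_K_nonneg]
      neumann_vec_pos[OF C_K_carrier m_pos C_K_nonneg t(1)] by auto
  have Cz: "(?C *\<^sub>v ?z) $ c \<le> t * ?z $ c" if "c < m" for c
    using neumann_vec_eq[OF C_K_carrier m_pos C_K_nonneg t(1) that] by simp
  obtain \<delta>0 where \<delta>0: "\<delta>0 > 0" "\<And>\<delta>. 0 < \<delta> \<Longrightarrow> \<delta> \<le> \<delta>0 \<Longrightarrow>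
      r_AB A B (extend_vec K ?z \<delta>) \<le> ereal (t + e / 2)"
    using r_AB_extend_vec_le[OF z Cz t(2), of "e / 2"] e by auto
  have "rho_AB A B \<le> r_AB A B (extend_vec K ?z \<delta>0)"
    using extend_vec_pos[OF z(1,2) \<delta>0(1)] A_carrier by (intro rho_AB_le_r_AB) auto
  also have "\<dots> \<le> ereal (spec_rad ?C + e)" using \<delta>0 by (simp add: t_def ac_simps)
  finally show "rho_AB A B \<le> ereal (spec_rad ?C) + ereal e" by simp
qed

end

definition row_block :: "nat \<Rightarrow> nat set" where
  "row_block l = {j. j < n \<and> row_of j = l}"

lemma finite_row_block: "finite (row_block l)"
  by (simp add: row_block_def)

lemma sum_row_block: "(\<Sum>j\<in>row_block l. f j) = (\<Sum>j<n. if row_of j = l then f j else 0)"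
proof -
  have "row_block l = {j\<in>{..<n}. row_of j = l}" by (auto simp: row_block_def)
  then show ?thesis by (simp only: sum.inter_filter[OF finite_lessThan])
qed

lemma sum_row_blocks: "(\<Sum>l<m. \<Sum>j\<in>row_block l. f j) = (\<Sum>j<n. f j)"
proof -
  have "(\<Sum>l<m. \<Sum>j\<in>row_block l. f j) = (\<Sum>l<m. \<Sum>j<n. if row_of j = l then f j else 0)"
    by (simp add: sum_row_block)
  also have "\<dots> = (\<Sum>j<n. \<Sum>l<m. if row_of j = l then f j else 0)" by (rule sum.swap)
  also have "\<dots> = (\<Sum>j<n. f j)" using row_of by (intro sum.cong) auto
  finally show ?thesis .
qed

lemma B_mult_vec_row_block:
  assumes x: "dim_vec x = n" and l: "l < m"
  shows "(B *\<^sub>v x) $ l = (\<Sum>j\<in>row_block l. B $$ (l,j) * x $ j)"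
proof -
  have "(B *\<^sub>v x) $ l = (\<Sum>j<n. if row_of j = l then B $$ (l,j) * x $ j else 0)"
    using mult_mat_vec_nth[OF B_carrier x l] B_eq_0_iff[OF _ l] by (auto intro!: sum.cong)
  then show ?thesis by (simp add: sum_row_block)
qed

lemma B_mult_pos_vec:
  assumes x: "dim_vec x = n" "pos_vec x" and l: "l < m"
  shows "(B *\<^sub>v x) $ l > 0"
proof -
  obtain j where j: "j < n" "row_of j = l" using ex_row_of_eq[OF l] by blast
  have pos: "B $$ (l,j') * x $ j' \<ge> 0" if "j' < n" for j'
    using B_nonneg_nth[OF l that] pos_vecD[OF x(2)] x(1) that by (simp add: less_imp_le)
  have "0 < B $$ (l,j) * x $ j" using row_of[OF j(1)] j pos_vecD[OF x(2)] x(1) by simp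
  also have "\<dots> \<le> (\<Sum>j<n. B $$ (l,j) * x $ j)" using j(1) pos by (intro member_le_sum) auto
  finally show ?thesis using mult_mat_vec_nth[OF B_carrier x(1) l] by simp
qed

lemma transpose_A_mult_nth: "p \<in> carrier_vec m \<Longrightarrow> j < n \<Longrightarrow> (transpose_mat A *\<^sub>v p) $ j = (\<Sum>i<m. p $ i * A $$ (i,j))"
  using mult_mat_vec_nth[of "transpose_mat A" n m p j] A_carrier by (simp add: ac_simps)

definition block_mat :: "real vec \<Rightarrow> real mat" where
  "block_mat x = mat m m (\<lambda>(i,l). (\<Sum>j\<in>row_block l. A $$ (i,j) * x $ j) / (B *\<^sub>v x) $ l)"

context
  fixes x assumes x: "dim_vec x = n" "pos_vec x"
begin

lemma block_mat_carrier: "block_mat x \<in> carrier_mat m m"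
  by (simp add: block_mat_def)

lemma block_mat_nonneg: "nonneg_mat (block_mat x)"
  using A_nonneg_nth pos_vecD[OF x(2)] x(1) B_mult_pos_vec[OF x]
  unfolding nonneg_mat_def block_mat_def row_block_def
  by (auto intro!: divide_nonneg_pos sum_nonneg mult_nonneg_nonneg simp: less_imp_le)

lemma block_mat_mult_B: "i < m \<Longrightarrow> (block_mat x *\<^sub>v (B *\<^sub>v x)) $ i = (A *\<^sub>v x) $ i"
  using mult_mat_vec_nth[OF block_mat_carrier _, of "B *\<^sub>v x"] B_carrier B_mult_pos_vec[OF x]
    mult_mat_vec_nth[OF A_carrier x(1)]
  by (simp add: block_mat_def sum_row_blocks[symmetric] less_imp_neq[symmetric])

lemma transpose_block_mat_mult:
  assumes p: "p \<in> carrier_vec m" and l: "l < m"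
  shows "(transpose_mat (block_mat x) *\<^sub>v p) $ l * (B *\<^sub>v x) $ l =
    (\<Sum>j\<in>row_block l. (transpose_mat A *\<^sub>v p) $ j * x $ j)"
proof -
  let ?a = "\<lambda>i. \<Sum>j\<in>row_block l. A $$ (i,j) * x $ j"
  have "(transpose_mat (block_mat x) *\<^sub>v p) $ l = (\<Sum>i<m. ?a i / (B *\<^sub>v x) $ l * p $ i)"
    using mult_mat_vec_nth[of "transpose_mat (block_mat x)" m m p l] block_mat_carrier p l
    by (simp add: block_mat_def)
  then have "(transpose_mat (block_mat x) *\<^sub>v p) $ l * (B *\<^sub>v x) $ l = (\<Sum>i<m. p $ i * ?a i)"
    using B_mult_pos_vec[OF x l] by (simp add: sum_divide_distrib[symmetric] mult.commute)
  also have "\<dots> = (\<Sum>j\<in>row_block l. (transpose_mat A *\<^sub>v p) $ j * x $ j)"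
    using p by (simp add: transpose_A_mult_nth row_block_def sum_distrib_left sum_distrib_right
        sum.swap[of _ "{..<m}"] ac_simps)
  finally show ?thesis .
qed

text \<open>The block matrix has spectral radius at most \<open>t\<close> (tested with \<open>B x\<close>), so the Neumann vector of
  its transpose at \<open>t' > t\<close> is a positive left subinvariant vector.\<close>
lemma exists_left_subinvariant:
  assumes le: "\<And>i. i < m \<Longrightarrow> (A *\<^sub>v x) $ i \<le> t * (B *\<^sub>v x) $ i" and t: "t < t'"
  obtains p where "p \<in> carrier_vec m" "pos_vec p"
    "\<And>l. l < m \<Longrightarrow> (\<Sum>j\<in>row_block l. (transpose_mat A *\<^sub>v p) $ j * x $ j) \<le> t' * p $ l * (B *\<^sub>v x) $ l"
proof -
  let ?G = "block_mat x"
  have GT: "transpose_mat ?G \<in> carrier_mat m m" "nonneg_mat (transpose_mat ?G)"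
    using block_mat_carrier block_mat_nonneg unfolding nonneg_mat_def by auto
  have "spec_rad ?G \<le> t"
    using block_mat_mult_B le B_carrier x(1) B_mult_pos_vec[OF x]
    by (intro spec_rad_le_subinvariant[OF block_mat_carrier m_pos block_mat_nonneg, of "B *\<^sub>v x"])
      (auto simp: pos_vec_def)
  then have rho: "spec_rad (transpose_mat ?G) < t'" using t spec_rad_transpose[OF block_mat_carrier] by simp
  let ?p = "neumann_vec (transpose_mat ?G) t'"
  have p: "?p \<in> carrier_vec m" "pos_vec ?p"
    using neumann_vec_carrier[OF GT(1) m_pos GT(2)] neumann_vec_pos[OF GT(1) m_pos GT(2) rho] by auto
  show thesis
  proof (rule that[OF p])
    fix l assume l: "l < m"
    have "(transpose_mat ?G *\<^sub>v ?p) $ l \<le> t' * ?p $ l"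
      using neumann_vec_eq[OF GT(1) m_pos GT(2) rho l] by simp
    then show "(\<Sum>j\<in>row_block l. (transpose_mat A *\<^sub>v ?p) $ j * x $ j) \<le> t' * ?p $ l * (B *\<^sub>v x) $ l"
      using transpose_block_mat_mult[OF p(1) l] mult_right_mono B_mult_pos_vec[OF x l]
      by (metis less_imp_le)
  qed
qed

end

lemma exists_transversal_le:
  assumes x: "dim_vec x = n" "pos_vec x"
    and sub: "\<And>l. l < m \<Longrightarrow> (\<Sum>j\<in>row_block l. \<phi> j * x $ j) \<le> s l * (B *\<^sub>v x) $ l"
  obtains K where "K \<in> M_set B" "\<And>j. j \<in> K \<Longrightarrow> \<phi> j \<le> s (row_of j) * B $$ (row_of j, j)"
proof -
  have "\<exists>j\<in>row_block l. \<phi> j \<le> s l * B $$ (l,j)" if l: "l < m" for l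
  proof (rule sum_weighted_le_imp_ex_le[OF finite_row_block])
    show "row_block l \<noteq> {}" using ex_row_of_eq[OF l] by (auto simp: row_block_def)
    show "x $ j > 0" if "j \<in> row_block l" for j
      using pos_vecD[OF x(2)] x(1) that by (simp add: row_block_def)
    show "(\<Sum>j\<in>row_block l. \<phi> j * x $ j) \<le> s l * (\<Sum>j\<in>row_block l. B $$ (l,j) * x $ j)"
      using sub[OF l] B_mult_vec_row_block[OF x(1) l] by simp
  qed
  then obtain k where k: "\<And>l. l < m \<Longrightarrow> k l \<in> row_block l \<and> \<phi> (k l) \<le> s l * B $$ (l, k l)"
    by metis
  have "k l < n \<and> row_of (k l) = l" if "l < m" for l using k[OF that] by (simp add: row_block_def)
  then have "k ` {..<m} \<in> M_set B" by (rule image_in_M_set)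
  moreover have "\<phi> j \<le> s (row_of j) * B $$ (row_of j, j)" if "j \<in> k ` {..<m}" for j
    using that k by (auto simp: row_block_def)
  ultimately show thesis by (rule that)
qed

text \<open>The transposed Collatz--Wielandt bound for \<open>C\<^sub>K\<close>, tested with the positive vector
  \<open>q\<^sub>c = p\<^bsub>\<sigma> c\<^esub> B\<^bsub>\<sigma> c, K\<^sub>c\<^esub>\<close>, where \<open>\<sigma> = row_idx K\<close>.\<close>
lemma spec_rad_C_K_le_left_subinvariant:
  assumes K: "K \<in> M_set B" and p: "p \<in> carrier_vec m" "pos_vec p"
    and le: "\<And>j. j \<in> K \<Longrightarrow> (transpose_mat A *\<^sub>v p) $ j \<le> t * p $ row_of j * B $$ (row_of j, j)"
  shows "spec_rad (C_K A B K) \<le> t"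
proof -
  let ?C = "C_K A B K"
  have CT: "transpose_mat ?C \<in> carrier_mat m m" "nonneg_mat (transpose_mat ?C)"
    using C_K_carrier[OF K] C_K_nonneg[OF K] by (auto simp: nonneg_mat_def)
  define q where "q = vec m (\<lambda>c. p $ row_idx K c * B $$ (row_idx K c, pick K c))"
  have q: "q \<in> carrier_vec m" "pos_vec q"
    using pos_vecD[OF p(2)] p(1) row_idx_less[OF K] B_pick_pos[OF K] by (auto simp: q_def pos_vec_def)
  have "(transpose_mat ?C *\<^sub>v q) $ b \<le> t * q $ b" if b: "b < m" for b
  proof -
    have "(transpose_mat ?C *\<^sub>v q) $ b = (\<Sum>c<m. ?C $$ (c,b) * q $ c)"
      using mult_mat_vec_nth[OF CT(1) _ b, of q] q(1) C_K_carrier[OF K] b by simp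
    also have "\<dots> = (\<Sum>c<m. p $ row_idx K c * A $$ (row_idx K c, pick K b))"
      using b by (intro sum.cong) (simp_all add: C_K_nth[OF K] q_def less_imp_neq[OF B_pick_pos[OF K], symmetric])
    also have "\<dots> = (transpose_mat A *\<^sub>v p) $ pick K b"
      using sum_row_idx[OF K, of "\<lambda>i. p $ i * A $$ (i, pick K b)"] pick_in_M_set[OF K b] p(1)
      by (simp add: transpose_A_mult_nth)
    also have "\<dots> \<le> t * q $ b"
      using le pick_in_M_set[OF K b] b by (simp add: q_def row_idx_def mult.assoc)
    finally show ?thesis .
  qed
  then have "spec_rad (transpose_mat ?C) \<le> t" by (rule spec_rad_le_subinvariant[OF CT(1) m_pos CT(2) q])
  then show ?thesis using spec_rad_transpose[OF C_K_carrier[OF K]] by simp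
qed

lemma exists_C_K_spec_rad_le:
  assumes x: "dim_vec x = n" "pos_vec x"
    and le: "\<And>i. i < m \<Longrightarrow> (A *\<^sub>v x) $ i \<le> t * (B *\<^sub>v x) $ i" and t: "t < t'"
  shows "\<exists>K\<in>M_set B. spec_rad (C_K A B K) \<le> t'"
proof -
  obtain p where p: "p \<in> carrier_vec m" "pos_vec p"
    and sub: "\<And>l. l < m \<Longrightarrow> (\<Sum>j\<in>row_block l. (transpose_mat A *\<^sub>v p) $ j * x $ j) \<le> t' * p $ l * (B *\<^sub>v x) $ l"
    using exists_left_subinvariant[OF x(1,2) le t] by blast
  obtain K where K: "K \<in> M_set B"
    and "\<And>j. j \<in> K \<Longrightarrow> (transpose_mat A *\<^sub>v p) $ j \<le> t' * p $ row_of j * B $$ (row_of j, j)"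
    using exists_transversal_le[OF x, of "\<lambda>j. (transpose_mat A *\<^sub>v p) $ j" "\<lambda>l. t' * p $ l"] sub
    by blast
  then show ?thesis using spec_rad_C_K_le_left_subinvariant[OF K p] by blast
qed

definition min_spec_rad :: real where
  "min_spec_rad = Min (spec_rad ` C_K A B ` M_set B)"

lemma min_spec_rad_le: "K \<in> M_set B \<Longrightarrow> min_spec_rad \<le> spec_rad (C_K A B K)"
  unfolding min_spec_rad_def using M_set_finite by (intro Min_le) auto

lemma ex_min_spec_rad: "\<exists>K\<in>M_set B. spec_rad (C_K A B K) = min_spec_rad"
proof -
  have "min_spec_rad \<in> spec_rad ` C_K A B ` M_set B"
    unfolding min_spec_rad_def using M_set_finite M_set_nonempty by (intro Min_in) auto
  then show ?thesis by auto
qed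

lemma min_spec_rad_nonneg: "min_spec_rad \<ge> 0"
  using ex_min_spec_rad spec_rad_nonneg[OF C_K_carrier m_pos] by metis

lemma min_spec_rad_le_rho_AB: "ereal min_spec_rad \<le> rho_AB A B"
  unfolding rho_AB_def
proof (rule INF_greatest, rule ccontr)
  fix x assume "x \<in> {x. dim_vec x = dim_col A \<and> pos_vec x}"
  then have x: "dim_vec x = n" "pos_vec x" using A_carrier by auto
  assume "\<not> ereal min_spec_rad \<le> r_AB A B x"
  then have lt: "r_AB A B x < ereal min_spec_rad" by simp
  define f where "f i = (A *\<^sub>v x) $ i / (B *\<^sub>v x) $ i" for i
  define t where "t = Max (f ` {..<m})"
  have fin: "finite (f ` {..<m})" "f ` {..<m} \<noteq> {}" using m_pos by auto
  have f_lt: "f i < min_spec_rad" if i: "i < m" for i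
  proof -
    have "ereal (f i) = ratio_e ((A *\<^sub>v x) $ i) ((B *\<^sub>v x) $ i)"
      using B_mult_pos_vec[OF x i] by (simp add: f_def ratio_e_def)
    also have "\<dots> \<le> r_AB A B x" using ratio_e_le_r_AB[of i A] A_carrier i by simp
    finally have "ereal (f i) < ereal min_spec_rad" using lt by (rule le_less_trans)
    then show ?thesis by simp
  qed
  have t: "t < min_spec_rad" using Max_in[OF fin] f_lt unfolding t_def by auto
  have "(A *\<^sub>v x) $ i \<le> t * (B *\<^sub>v x) $ i" if i: "i < m" for i
  proof -
    have "f i \<le> t" unfolding t_def using Max_ge[OF fin(1)] i by simp
    then show ?thesis using B_mult_pos_vec[OF x i] by (simp add: f_def pos_divide_le_eq)
  qed
  then obtain K where K: "K \<in> M_set B" "spec_rad (C_K A B K) \<le> (t + min_spec_rad) / 2"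
    using exists_C_K_spec_rad_le[OF x, of t "(t + min_spec_rad) / 2"] t by auto
  then show False using min_spec_rad_le[OF K(1)] t by simp
qed

lemma rho_AB_eq_min_spec_rad: "rho_AB A B = ereal min_spec_rad"
  using ex_min_spec_rad rho_AB_le_spec_rad_C_K min_spec_rad_le_rho_AB by (metis antisym)

context
  fixes K assumes K: "K \<in> M_set B"
begin

lemma extend_vec_eigenvector:
  assumes y0: "y0 \<in> carrier_vec m" and ev: "C_K A B K *\<^sub>v y0 = c \<cdot>\<^sub>v y0"
  shows "A *\<^sub>v extend_vec K y0 0 = c \<cdot>\<^sub>v (B *\<^sub>v extend_vec K y0 0)"
proof (rule eq_vecI)
  fix i assume "i < dim_vec (c \<cdot>\<^sub>v (B *\<^sub>v extend_vec K y0 0))"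
  then have i: "i < m" using B_carrier by simp
  have "(C_K A B K *\<^sub>v y0) $ col_idx K i = c * y0 $ col_idx K i"
    using ev y0 col_idx_less[OF K i] by simp
  then show "(A *\<^sub>v extend_vec K y0 0) $ i = (c \<cdot>\<^sub>v (B *\<^sub>v extend_vec K y0 0)) $ i"
    using A_mult_extend_vec[OF K y0 i] B_mult_extend_vec[OF K i] i B_carrier by simp
qed (use A_carrier B_carrier in simp)

lemma nonneg_extend_vec:
  assumes "v \<in> carrier_vec m" "nonneg_vec v"
  shows "nonneg_vec (extend_vec K v 0)"
  unfolding nonneg_vec_def
proof (intro allI impI)
  fix j assume "j < dim_vec (extend_vec K v 0)"
  then have j: "j < n" by simp
  show "extend_vec K v 0 $ j \<ge> 0"
  proof (cases "j \<in> K")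
    case True
    then obtain c where "c < m" "j = pick K c" using ex_pick_eq[OF K] by blast
    then show ?thesis using assms by (simp add: extend_vec_pick[OF K] nonneg_vec_def)
  qed (use j in \<open>simp add: extend_vec_out\<close>)
qed

lemma prob_vec_extend_vec:
  assumes y0: "y0 \<in> carrier_vec m" "nonneg_vec y0" "(\<Sum>c<m. y0 $ c) = 1"
  shows "prob_vec n (extend_vec K y0 0)"
proof -
  have "(\<Sum>j<n. extend_vec K y0 0 $ j) = (\<Sum>j\<in>K. extend_vec K y0 0 $ j)"
    using M_setD(1)[OF K] extend_vec_out by (intro sum.mono_neutral_right) auto
  also have "\<dots> = (\<Sum>c<m. y0 $ c)"
    using sum.reindex_bij_betw[OF bij_betw_pick_M_set[OF K], where g = "\<lambda>j. extend_vec K y0 0 $ j"]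
    by (simp add: extend_vec_pick[OF K])
  finally show ?thesis using y0 nonneg_extend_vec by (simp add: prob_vec_def)
qed

lemma supp_extend_vec: "supp_vec (extend_vec K y0 0) \<subseteq> K"
  using extend_vec_out by (auto simp: supp_vec_def)

lemma extend_vec_seq_r_AB_le:
  assumes u: "\<And>k. u k \<in> carrier_vec m" "\<And>k. pos_vec (u k)"
      "\<And>k c. c < m \<Longrightarrow> (C_K A B K *\<^sub>v u k) $ c \<le> t k * u k $ c"
    and t: "\<And>k. t k \<ge> 0"
  obtains \<delta> where "\<And>k. \<delta> k > 0" "\<delta> \<longlonglongrightarrow> 0"
    "\<And>k. r_AB A B (extend_vec K (u k) (\<delta> k)) \<le> ereal (t k + inverse (real (Suc k)))"
proof -
  let ?\<eta> = "\<lambda>k. inverse (real (Suc k))"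
  have "\<forall>k. \<exists>\<delta>. 0 < \<delta> \<and> \<delta> \<le> ?\<eta> k \<and> r_AB A B (extend_vec K (u k) \<delta>) \<le> ereal (t k + ?\<eta> k)"
  proof
    fix k
    have "?\<eta> k > 0" by simp
    then obtain \<delta>0 where "\<delta>0 > 0"
      "\<And>\<delta>. 0 < \<delta> \<Longrightarrow> \<delta> \<le> \<delta>0 \<Longrightarrow> r_AB A B (extend_vec K (u k) \<delta>) \<le> ereal (t k + ?\<eta> k)"
      using r_AB_extend_vec_le[OF K u(1)[of k] u(2)[of k] u(3)[where k = k] t] by metis
    then show "\<exists>\<delta>. 0 < \<delta> \<and> \<delta> \<le> ?\<eta> k \<and> r_AB A B (extend_vec K (u k) \<delta>) \<le> ereal (t k + ?\<eta> k)"
      by (intro exI[of _ "min \<delta>0 (?\<eta> k)"]) auto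
  qed
  from choice[OF this] obtain \<delta> where \<delta>: "\<forall>k. 0 < \<delta> k \<and> \<delta> k \<le> ?\<eta> k \<and>
      r_AB A B (extend_vec K (u k) (\<delta> k)) \<le> ereal (t k + ?\<eta> k)" ..
  have "\<delta> \<longlonglongrightarrow> 0"
    by (rule tendsto_sandwich[OF _ _ tendsto_const LIMSEQ_inverse_real_of_nat])
      (use \<delta> in \<open>simp_all add: less_imp_le\<close>)
  then show thesis using that \<delta> by blast
qed

text \<open>The optimality witnesses are the perturbations of the subinvariant vectors \<open>u\<^sub>k\<close> that converge
  to \<open>y0\<close>.\<close>
lemma optimal_extend_vec:
  assumes y0: "y0 \<in> carrier_vec m" "nonneg_vec y0" "(\<Sum>c<m. y0 $ c) = 1"
    and r: "r_AB A B (extend_vec K y0 0) = rho_AB A B"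
    and u: "\<And>k. u k \<in> carrier_vec m" "\<And>k. pos_vec (u k)"
      "\<And>k c. c < m \<Longrightarrow> (C_K A B K *\<^sub>v u k) $ c \<le> t k * u k $ c"
    and Kmin: "spec_rad (C_K A B K) = min_spec_rad"
    and t: "t \<longlonglongrightarrow> min_spec_rad" and lim: "\<And>c. c < m \<Longrightarrow> (\<lambda>k. u k $ c) \<longlonglongrightarrow> y0 $ c"
  shows "optimal A B (extend_vec K y0 0)"
proof -
  let ?y = "extend_vec K y0 0"
  have t0: "t k \<ge> 0" for k
    using spec_rad_le_subinvariant[OF C_K_carrier[OF K] m_pos C_K_nonneg[OF K] u(1)[of k] u(2)[of k]
        u(3)[where k = k]] Kmin min_spec_rad_nonneg by simp
  obtain \<delta> where \<delta>: "\<And>k. \<delta> k > 0" "\<delta> \<longlonglongrightarrow> 0"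
    and r_le: "\<And>k. r_AB A B (extend_vec K (u k) (\<delta> k)) \<le> ereal (t k + inverse (real (Suc k)))"
    using extend_vec_seq_r_AB_le[where u = u and t = t, OF u t0] by blast
  define Y where "Y k = extend_vec K (u k) (\<delta> k)" for k
  have Y: "dim_vec (Y k) = n" "pos_vec (Y k)" for k
    unfolding Y_def using extend_vec_pos[OF K u(1,2) \<delta>(1)] by auto
  have up: "(\<lambda>k. ereal (t k + inverse (real (Suc k)))) \<longlonglongrightarrow> rho_AB A B"
    using tendsto_add[OF t LIMSEQ_inverse_real_of_nat] by (simp add: rho_AB_eq_min_spec_rad)
  have low: "rho_AB A B \<le> r_AB A B (Y k)" for k using rho_AB_le_r_AB Y A_carrier by simp
  have rlim: "(\<lambda>k. r_AB A B (Y k)) \<longlonglongrightarrow> rho_AB A B"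
    by (rule tendsto_sandwich[OF _ _ tendsto_const up]) (use low r_le in \<open>simp_all add: Y_def\<close>)
  have Ylim: "(\<lambda>k. Y k $ j) \<longlonglongrightarrow> ?y $ j" if j: "j < n" for j
  proof (cases "j \<in> K")
    case True
    then obtain c where "c < m" "j = pick K c" using ex_pick_eq[OF K] by blast
    then show ?thesis using lim by (simp add: Y_def extend_vec_pick[OF K])
  qed (use \<delta>(2) j in \<open>simp add: Y_def extend_vec_out\<close>)
  have "prob_vec n ?y" by (rule prob_vec_extend_vec[OF y0])
  then have "nonneg_vec ?y" "?y \<noteq> 0\<^sub>v n" by (auto simp: prob_vec_def)
  then show ?thesis
    unfolding optimal_def using A_carrier r Y Ylim rlim by (intro conjI exI[of _ Y]) auto
qed

end

lemma exists_optimal_GPF_eigenvector: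
  assumes K: "K \<in> M_set B" and Kmin: "spec_rad (C_K A B K) = min_spec_rad"
  shows "\<exists>y. prob_vec n y \<and> optimal A B y \<and> supp_vec y \<subseteq> K \<and> GPF_eigenvector A B y"
proof -
  obtain u t y0 where u: "\<And>k. u k \<in> carrier_vec m" "\<And>k. pos_vec (u k)"
      "\<And>k c. c < m \<Longrightarrow> (C_K A B K *\<^sub>v u k) $ c \<le> t k * u k $ c"
    and t: "t \<longlonglongrightarrow> spec_rad (C_K A B K)" and lim: "\<And>c. c < m \<Longrightarrow> (\<lambda>k. u k $ c) \<longlonglongrightarrow> y0 $ c"
    and y0: "y0 \<in> carrier_vec m" "nonneg_vec y0" "(\<Sum>c<m. y0 $ c) = 1"
    and ev: "C_K A B K *\<^sub>v y0 = spec_rad (C_K A B K) \<cdot>\<^sub>v y0"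
    using perron_eigenvector_approx[OF C_K_carrier[OF K] m_pos C_K_nonneg[OF K]] by blast
  let ?y = "extend_vec K y0 0"
  have eq: "A *\<^sub>v ?y = min_spec_rad \<cdot>\<^sub>v (B *\<^sub>v ?y)"
    using extend_vec_eigenvector[OF K y0(1) ev] Kmin by simp
  have y0_nz: "y0 \<noteq> 0\<^sub>v m" using y0(3) by auto
  then obtain c where c: "c < m" "y0 $ c > 0"
    using y0(1,2) by (metis carrier_vecD eq_vecI index_zero_vec(1,2) nonneg_vec_def order_less_le)
  have By: "(B *\<^sub>v ?y) $ i = B $$ (i, pick K (col_idx K i)) * y0 $ col_idx K i" if "i < m" for i
    using B_mult_extend_vec[OF K that] by simp
  have "r_AB A B ?y = ereal min_spec_rad"
  proof (rule r_AB_eigen[OF eq min_spec_rad_nonneg])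
    show "(B *\<^sub>v ?y) $ i \<ge> 0" if "i < dim_row A" for i
      using that A_carrier By B_nonneg_nth pick_in_M_set[OF K] col_idx_less[OF K] y0(1,2)
      by (auto simp: nonneg_vec_def)
    show "row_idx K c < dim_row A" using row_idx_less[OF K c(1)] A_carrier by simp
    show "(B *\<^sub>v ?y) $ row_idx K c > 0"
      using By[OF row_idx_less[OF K c(1)]] col_idx_row_idx[OF K c(1)] B_pick_pos[OF K c(1)] c by simp
  qed
  then have r: "r_AB A B ?y = rho_AB A B" by (simp add: rho_AB_eq_min_spec_rad)
  have opt: "optimal A B ?y"
    using optimal_extend_vec[OF K y0 r, where u = u and t = t, OF u Kmin] t Kmin lim by simp
  have "GPF_eigenvector A B ?y"
    using opt eq A_carrier unfolding GPF_eigenvector_def optimal_def rho_AB_eq_min_spec_rad by auto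
  then show ?thesis using prob_vec_extend_vec[OF K y0] opt supp_extend_vec[OF K] by blast
qed

context
  fixes K assumes K: "K \<in> M_set B"
begin

lemma B_mult_vec_row_idx_eq_0:
  assumes z: "dim_vec z = n" "supp_vec z \<subseteq> K" and a: "a < m" "z $ pick K a = 0"
  shows "(B *\<^sub>v z) $ row_idx K a = 0"
proof -
  have "B $$ (row_idx K a, j) * z $ j = 0" if j: "j < n" for j
  proof (cases "z $ j = 0")
    case False
    then have "j \<in> K" using z j by (auto simp: supp_vec_def)
    then obtain c where c: "c < m" "j = pick K c" using ex_pick_eq[OF K] by blast
    then have "c \<noteq> a" using False a by auto
    then have "row_idx K a \<noteq> row_idx K c" using row_idx_inj[OF K c(1) a(1)] by auto
    then show ?thesis using B_pick_eq_0[OF K row_idx_less[OF K a(1)] c(1)] c by simp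
  qed simp
  then have "(\<Sum>j<n. B $$ (row_idx K a, j) * z $ j) = 0" by (intro sum.neutral) auto
  then show ?thesis using mult_mat_vec_nth[OF B_carrier z(1) row_idx_less[OF K a(1)]] by simp
qed

lemma A_mult_vec_row_idx_pos:
  assumes z: "dim_vec z = n" "nonneg_vec z" and ab: "a < m" "b < m" "C_K A B K $$ (a,b) > 0"
    and zb: "z $ pick K b > 0"
  shows "(A *\<^sub>v z) $ row_idx K a > 0"
proof -
  let ?i = "row_idx K a"
  have i: "?i < m" by (rule row_idx_less[OF K ab(1)])
  have "A $$ (?i, pick K b) > 0"
    using ab(3) B_pick_pos[OF K ab(1)] by (simp add: C_K_nth[OF K ab(1,2)] zero_less_divide_iff)
  then have "0 < A $$ (?i, pick K b) * z $ pick K b" using zb by simp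
  also have "\<dots> \<le> (\<Sum>j<n. A $$ (?i,j) * z $ j)"
    using pick_in_M_set[OF K ab(2)] A_nonneg_nth[OF i] z by (intro member_le_sum) (auto simp: nonneg_vec_def)
  finally show ?thesis using mult_mat_vec_nth[OF A_carrier z(1) i] by simp
qed

text \<open>A smaller support would leave some column of \<open>K\<close> outside it; irreducibility of \<open>C\<^sub>K\<close> yields a
  row of \<open>B z\<close> that vanishes while the same row of \<open>A z\<close> does not, forcing \<open>r(A,B,z) = \<infinity>\<close>.\<close>
lemma minimal_optimal_if_S_irreducible:
  assumes irr: "S_irreducible A B" and y: "optimal A B y" "supp_vec y \<subseteq> K"
  shows "minimal_optimal A B y"
  unfolding minimal_optimal_def
proof (intro conjI y(1) notI)
  assume "\<exists>z. optimal A B z \<and> supp_vec z \<subset> supp_vec y"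
  then obtain z where z: "optimal A B z" "supp_vec z \<subset> supp_vec y" by blast
  have zd: "dim_vec z = n" and znn: "nonneg_vec z" and znz: "z \<noteq> 0\<^sub>v n"
    and rz: "r_AB A B z = rho_AB A B"
    using z(1) A_carrier unfolding optimal_def by auto
  have zK: "supp_vec z \<subseteq> K" using z(2) y(2) by blast
  define S where "S = {c. c < m \<and> z $ pick K c \<noteq> 0}"
  obtain j1 where "j1 < n" "z $ j1 \<noteq> 0" using znz zd by (metis eq_vecI index_zero_vec(1,2))
  then have "j1 \<in> K" using zK zd by (auto simp: supp_vec_def)
  then obtain c1 where c1: "c1 < m" "c1 \<in> S"
    using ex_pick_eq[OF K] \<open>z $ j1 \<noteq> 0\<close> by (auto simp: S_def)
  obtain j0 where "j0 \<in> K" "j0 \<notin> supp_vec z" using z(2) y(2) by blast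
  then obtain c0 where c0: "c0 < m" "c0 \<notin> S"
    using ex_pick_eq[OF K] M_setD(1)[OF K] zd by (fastforce simp: S_def supp_vec_def)
  have "irreducible_mat (C_K A B K)" using irr K unfolding S_irreducible_def by blast
  then obtain a b where ab: "a < m" "b < m" "C_K A B K $$ (a,b) > 0" "a \<notin> S" "b \<in> S"
    using irreducible_mat_crossing_edge[of "C_K A B K" c0 c1 S] c0 c1 C_K_carrier[OF K] by auto
  have za: "z $ pick K a = 0" using ab(1,4) by (simp add: S_def)
  have "z $ pick K b > 0"
    using ab(5) znn pick_in_M_set[OF K ab(2)] zd by (auto simp: S_def nonneg_vec_def order_less_le)
  then have "r_AB A B z = \<infinity>"
    using r_AB_eq_infinity[of "row_idx K a" A B z] row_idx_less[OF K ab(1)] A_carrier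
      B_mult_vec_row_idx_eq_0[OF zd zK ab(1) za] A_mult_vec_row_idx_pos[OF zd znn ab(1-3)]
    by simp
  then show False using rz rho_AB_eq_min_spec_rad by simp
qed

end

end

theorem theorem6p5:
  fixes m n :: nat and A B :: "real mat"
  assumes m_pos: "0 < m"
    and WN: "WN_pair m n A B"
  shows "rho_AB A B = ereal (Min (spec_rad ` C_K A B ` M_set B)) \<and>
    (\<forall>K\<in>M_set B. spec_rad (C_K A B K) = Min (spec_rad ` C_K A B ` M_set B) \<longrightarrow>
       (\<exists>y. prob_vec n y \<and> optimal A B y \<and> supp_vec y \<subseteq> K \<and> GPF_eigenvector A B y)) \<and>
    (S_irreducible A B \<longrightarrow>
       (\<forall>K\<in>M_set B. spec_rad (C_K A B K) = Min (spec_rad ` C_K A B ` M_set B) \<longrightarrow>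
          (\<forall>y. prob_vec n y \<and> optimal A B y \<and> supp_vec y \<subseteq> K \<and> GPF_eigenvector A B y
               \<longrightarrow> minimal_optimal A B y)))"
proof -
  interpret wn_pair m n A B using m_pos WN by unfold_locales
  show ?thesis
    using rho_AB_eq_min_spec_rad exists_optimal_GPF_eigenvector minimal_optimal_if_S_irreducible
    unfolding min_spec_rad_def by blast
qed

end
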